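(* Let $\Gamma=(V,E)$ be a finite simple graph on $V=\{1,\dots,n\}$ with clique number $\omega$, and let $\{T_j\}_{j=1}^n$ be a $\Gamma$-family on a Hilbert space $\mathcal{H}$ satisfying the weak Brehmer's condition. For $0\le r<1$ define the Cauchy transform $C_{r,T}:\mathcal{H}\to\ell^2(A_\Gamma^+)\otimes\mathcal{H}$ by $C_{r,T}h=\sum_{p\in A_\Gamma^+}\delta_p\otimes r^{|p|}T_p^*h$. Then $C_{r,T}$ is a well-defined bounded operator for every $0\le r<1$, and for each $h\in\mathcal{H}$, \[\|C_{r,T}h\|^2\leq\frac{1}{(1-r^2)^{\omega}}\|h\|^2.\]
   Context: $A_\Gamma^+=\langle e_1,\dots,e_n : e_ie_j=e_je_i \text{ if } ij\in E\rangle$ is the right-angled Artin monoid; $|p|$ is the number of generators in any expression of $p$ ($|1|=0$). $\{\delta_p:p\in A_\Gamma^+\}$ is the canonical orthonormal basis of $\ell^2(A_\Gamma^+)$. A $\Gamma$-family is a family of contractions $T_1,\dots,T_n$ on $\mathcal{H}$ with $T_iT_j=T_jT_i$ whenever $ij\in E$; it defines a unital representation $p\mapsto T_p$ with $T_{e_i}=T_i$. For a finite $U\subset A_\Gamma^+$, $\vee U=\infty$ if $\bigcap_{p\in U}pA_\Gamma^+=\emptyset$, otherwise $\vee U$ is the unique $r$ with $\bigcap_{p\in U}pA_\Gamma^+=rA_\Gamma^+$ ($\vee\emptyset=1$); $T_{\vee U}:=0$ if $\vee U=\infty$. For a set $U$ of generators, $\vee U<\infty$ iff the vertices form a clique, and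 then $\vee U=\prod_{e_i\in U}e_i$. The complement graph $\Gamma^c$ has vertex set $V$ and edges $\{ij:i\ne j,\ ij\notin E\}$. Weak Brehmer's condition: for each vertex set $V_i$ of a connected component of $\Gamma^c$, with $\Gamma_i=\Gamma|_{V_i}$, and each clique $W$ of $\Gamma_i$ (including $\emptyset$), with $N_{\Gamma_i}(W)=\{e_j: j\in V_i,\ jk\in E\ \forall k\in W\}$, one has $\sum_{U\subseteq N_{\Gamma_i}(W)}(-1)^{|U|}T_{\vee U}T_{\vee U}^*\ge0$. *)

theory Defs
  imports "HOL-Analysis.Analysis"
begin

text \<open>Graph: vertex set V = {1..n}, adjacency E (assumed symmetric, irreflexive).\<close>

definition is_clique :: "(nat \<Rightarrow> nat \<Rightarrow> bool) \<Rightarrow> nat set \<Rightarrow> bool" where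
  "is_clique E W \<longleftrightarrow> (\<forall>i\<in>W. \<forall>j\<in>W. i \<noteq> j \<longrightarrow> E i j)"

definition clique_number :: "nat \<Rightarrow> (nat \<Rightarrow> nat \<Rightarrow> bool) \<Rightarrow> nat" where
  "clique_number n E = Max (card ` {W. W \<subseteq> {1..n} \<and> is_clique E W})"

definition compl_edge :: "nat \<Rightarrow> (nat \<Rightarrow> nat \<Rightarrow> bool) \<Rightarrow> nat \<Rightarrow> nat \<Rightarrow> bool" where
  "compl_edge n E i j \<longleftrightarrow> i \<in> {1..n} \<and> j \<in> {1..n} \<and> i \<noteq> j \<and> \<not> E i j"

definition compl_components :: "nat \<Rightarrow> (nat \<Rightarrow> nat \<Rightarrow> bool) \<Rightarrow> nat set set" where
  "compl_components n E = (\<lambda>i. {j. (compl_edge n E)\<^sup>*\<^sup>* i j}) ` {1..n}"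

definition nbhd :: "(nat \<Rightarrow> nat \<Rightarrow> bool) \<Rightarrow> nat set \<Rightarrow> nat set \<Rightarrow> nat set" where
  "nbhd E Vi W = {j \<in> Vi. \<forall>k\<in>W. E j k}"

text \<open>Right-angled Artin monoid: words over {1..n} modulo commuting adjacent
  letters that are joined by an edge.\<close>

inductive swap_step :: "(nat \<Rightarrow> nat \<Rightarrow> bool) \<Rightarrow> nat list \<Rightarrow> nat list \<Rightarrow> bool" for E where
  "E a b \<Longrightarrow> swap_step E (xs @ [a, b] @ ys) (xs @ [b, a] @ ys)"

definition word_equiv :: "(nat \<Rightarrow> nat \<Rightarrow> bool) \<Rightarrow> nat list \<Rightarrow> nat list \<Rightarrow> bool" where
  "word_equiv E = (symclp (swap_step E))\<^sup>*\<^sup>*"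

definition raam :: "nat \<Rightarrow> (nat \<Rightarrow> nat \<Rightarrow> bool) \<Rightarrow> nat list set set" where
  "raam n E = (\<lambda>w. {v. word_equiv E w v}) ` {w. set w \<subseteq> {1..n}}"

definition rep :: "nat list set \<Rightarrow> nat list" where
  "rep p = (SOME w. w \<in> p)"

definition mlen :: "nat list set \<Rightarrow> nat" where
  "mlen p = length (rep p)"

definition word_op :: "(nat \<Rightarrow> 'a \<Rightarrow> 'a) \<Rightarrow> nat list \<Rightarrow> 'a \<Rightarrow> 'a" where
  "word_op T w = foldr (\<lambda>i f. T i \<circ> f) w id"

definition mon_op :: "(nat \<Rightarrow> 'a \<Rightarrow> 'a) \<Rightarrow> nat list set \<Rightarrow> 'a \<Rightarrow> 'a" where
  "mon_op T p = word_op T (rep p)"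

definition join_op :: "(nat \<Rightarrow> nat \<Rightarrow> bool) \<Rightarrow> (nat \<Rightarrow> 'a::real_vector \<Rightarrow> 'a) \<Rightarrow> nat set \<Rightarrow> 'a \<Rightarrow> 'a" where
  "join_op E T U = (if is_clique E U then word_op T (sorted_list_of_set U) else (\<lambda>_. 0))"

definition positive_op :: "('a::real_inner \<Rightarrow> 'a) \<Rightarrow> bool" where
  "positive_op A \<longleftrightarrow> (\<forall>h. 0 \<le> inner (A h) h)"

definition weak_brehmer :: "nat \<Rightarrow> (nat \<Rightarrow> nat \<Rightarrow> bool) \<Rightarrow> (nat \<Rightarrow> 'a::real_inner \<Rightarrow> 'a) \<Rightarrow> bool" where
  "weak_brehmer n E T \<longleftrightarrow>
     (\<forall>Vi \<in> compl_components n E. \<forall>W. W \<subseteq> Vi \<and> is_clique E W \<longrightarrow>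
        positive_op (\<lambda>h. \<Sum>U \<in> Pow (nbhd E Vi W).
            (-1) ^ card U *\<^sub>R join_op E T U (adjoint (join_op E T U) h)))"

definition gamma_family :: "nat \<Rightarrow> (nat \<Rightarrow> nat \<Rightarrow> bool) \<Rightarrow> (nat \<Rightarrow> 'a::real_normed_vector \<Rightarrow> 'a) \<Rightarrow> bool" where
  "gamma_family n E T \<longleftrightarrow>
     (\<forall>i\<in>{1..n}. bounded_linear (T i) \<and> (\<forall>x. norm (T i x) \<le> norm x)) \<and>
     (\<forall>i\<in>{1..n}. \<forall>j\<in>{1..n}. E i j \<longrightarrow> T i \<circ> T j = T j \<circ> T i)"

text \<open>Cauchy transform, as an element of l2(A_Gamma^+; H) = l2(A_Gamma^+) (x) H:
  p \<mapsto> r^|p| T_p^* h.\<close>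

definition cauchy_transform :: "real \<Rightarrow> (nat \<Rightarrow> 'a::real_inner \<Rightarrow> 'a) \<Rightarrow> 'a \<Rightarrow> nat list set \<Rightarrow> 'a" where
  "cauchy_transform r T h p = (r ^ mlen p) *\<^sub>R adjoint (mon_op T p) h"

end

(*
  Write psi_U(y) = |T_U^* y|^2 for a clique U (join_norm2), let S be the vertex set
  of one component of the complement graph and d its clique number.  For a clique Y of S the
  weak Brehmer condition says that B_Y(y) = sum_{U <= N(Y)} (-1)^|U| psi_U(T_Y^* y) >= 0
  (brehmer_sum).  Weighting B_Y by the coefficient c_{d-|Y|}(j) of s^j in (1 - s)^-(d-|Y|)
  (mchoose) and summing over Y yields a nonnegative quantity (weighted_brehmer_sum) equal to
  sum_{U clique, |U| <= j} (-1)^|U| c_d(j - |U|) psi_U(y).  Evaluate it at y = T_p^* h and sum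
  over all p with |p| <= m: an element q with |q| = k >= 1 arises as p * (product of U) once for
  every subset U of the nonempty set of letters that can end q, so these terms cancel and only
  c_d(m) |h|^2 survives.  Hence sum_{|p| = m} |T_p^* h|^2 <= c_d(m) |h|^2,
  and sum_p s^|p| |T_p^* h|^2 <= (1 - s)^-d |h|^2.

  Letters from different components commute, so A_Gamma^+ is the product of the monoids of the
  components and these bounds multiply; a union of maximum cliques of the components is a clique
  of Gamma, so the exponents add up to at most omega.  Finally take s = r^2.  Adjoints exist by
  the Riesz representation theorem, obtained from the point of minimal norm on a hyperplane.
*)

theory Submission
  imports Defs
begin

section \<open>Adjoints in real Hilbert spaces\<close>

lemma minimizing_sequence_Cauchy:
  fixes X :: "nat \<Rightarrow> 'a::real_inner"
  assumes "convex S" "\<And>k. X k \<in> S" "\<And>x. x \<in> S \<Longrightarrow> \<delta> \<le> (norm x)\<^sup>2"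
    and "\<And>k. (norm (X k))\<^sup>2 < \<delta> + 1 / Suc k"
  shows "Cauchy X"
proof (rule metric_CauchyI)
  have dist_X: "(dist (X k) (X l))\<^sup>2 \<le> 2 / Suc k + 2 / Suc l" for k l
  proof -
    have mid: "(1/2) *\<^sub>R X k + (1/2) *\<^sub>R X l \<in> S"
      using assms(1,2) by (intro convexD) auto
    have "(dist (X k) (X l))\<^sup>2
        = 2 * (norm (X k))\<^sup>2 + 2 * (norm (X l))\<^sup>2 - 4 * (norm ((1/2) *\<^sub>R X k + (1/2) *\<^sub>R X l))\<^sup>2"
      by (simp add: dist_norm power2_norm_eq_inner inner_diff inner_add algebra_simps)
    then show ?thesis
      using assms(4)[of k] assms(4)[of l] assms(3)[OF mid] by linarith
  qed
  fix e :: real assume "e > 0"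
  obtain N :: nat where "4 / e\<^sup>2 < N"
    using reals_Archimedean2 by blast
  then have "4 / e\<^sup>2 < Suc N"
    by simp
  then have "4 / Suc N < e\<^sup>2"
    using \<open>e > 0\<close> by (simp add: field_simps)
  have "(dist (X k) (X l))\<^sup>2 < e\<^sup>2" if "N \<le> k" "N \<le> l" for k l
  proof -
    have "2 / Suc k \<le> 2 / Suc N" "2 / Suc l \<le> 2 / Suc N"
      using that by (simp_all add: frac_le)
    with dist_X[of k l] \<open>4 / Suc N < e\<^sup>2\<close> show ?thesis
      by simp
  qed
  then show "\<exists>N. \<forall>k\<ge>N. \<forall>l\<ge>N. dist (X k) (X l) < e"
    using \<open>e > 0\<close> by (meson power_less_imp_less_base less_imp_le)
qed

lemma closed_convex_has_min_norm:
  fixes S :: "'a::{real_inner,complete_space} set"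
  assumes "closed S" "convex S" "S \<noteq> {}"
  shows "\<exists>z\<in>S. \<forall>x\<in>S. norm z \<le> norm x"
proof -
  define \<delta> where "\<delta> = Inf ((\<lambda>x. (norm x)\<^sup>2) ` S)"
  have bdd: "bdd_below ((\<lambda>x. (norm x)\<^sup>2) ` S)"
    by (rule bdd_belowI[of _ 0]) auto
  have \<delta>_le: "\<delta> \<le> (norm x)\<^sup>2" if "x \<in> S" for x
    unfolding \<delta>_def using bdd that by (simp add: cInf_lower)
  have "\<exists>x\<in>S. (norm x)\<^sup>2 < \<delta> + 1 / Suc k" for k
    using cInf_lessD[of "(\<lambda>x. (norm x)\<^sup>2) ` S" "\<delta> + 1 / Suc k"] assms(3)
    by (auto simp: \<delta>_def)
  then obtain X where X: "\<And>k. X k \<in> S" "\<And>k. (norm (X k))\<^sup>2 < \<delta> + 1 / Suc k"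
    by metis
  then obtain z where z: "X \<longlonglongrightarrow> z"
    using minimizing_sequence_Cauchy[OF assms(2) _ \<delta>_le] Cauchy_convergent convergent_def by blast
  have "z \<in> S"
    using assms(1) X(1) z closed_sequentially by blast
  have "(\<lambda>k. (norm (X k))\<^sup>2) \<longlonglongrightarrow> (norm z)\<^sup>2"
    using z by (intro tendsto_intros)
  moreover have "(\<lambda>k. \<delta> + 1 / Suc k) \<longlonglongrightarrow> \<delta> + 0"
    by (intro tendsto_intros LIMSEQ_inverse_real_of_nat[unfolded inverse_eq_divide])
  ultimately have "(norm z)\<^sup>2 \<le> \<delta>"
    using X(2) by (simp add: LIMSEQ_le less_imp_le)
  then have "norm z \<le> norm x" if "x \<in> S" for x
    using \<delta>_le[OF that] by (simp add: power2_le_imp_le)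
  with \<open>z \<in> S\<close> show ?thesis by blast
qed

lemma nonneg_quadratic_imp_linear_coeff_zero:
  fixes a K :: real
  assumes "\<And>t. 0 \<le> 2 * t * a + t\<^sup>2 * K" and "0 \<le> K"
  shows "a = 0"
proof -
  define e where "e = 1 / (K + 1)"
  have "e > 0" "e * K < 1"
    using \<open>0 \<le> K\<close> by (auto simp: e_def divide_less_eq)
  have "0 \<le> 2 * (- a * e) * a + (- a * e)\<^sup>2 * K"
    by (rule assms(1))
  also have "\<dots> = a\<^sup>2 * e * (e * K - 2)"
    by (simp add: power2_eq_square algebra_simps)
  finally have "a\<^sup>2 * e \<le> 0"
    using \<open>e * K < 1\<close> by (simp add: zero_le_mult_iff)
  then show "a = 0"
    using \<open>e > 0\<close> by (simp add: mult_le_0_iff)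
qed

lemma min_norm_orthogonal_kernel:
  fixes f :: "'a::real_inner \<Rightarrow> real"
  assumes "linear f" "f z = 1" "\<And>x. f x = 1 \<Longrightarrow> norm z \<le> norm x" "f k = 0"
  shows "z \<bullet> k = 0"
proof (rule nonneg_quadratic_imp_linear_coeff_zero)
  fix t
  have "norm z \<le> norm (z + t *\<^sub>R k)"
    using assms by (intro assms(3)) (simp add: linear_add linear_scale)
  then have "(norm z)\<^sup>2 \<le> (norm (z + t *\<^sub>R k))\<^sup>2"
    by (simp add: power_mono)
  also have "\<dots> = (norm z)\<^sup>2 + 2 * t * (z \<bullet> k) + t\<^sup>2 * (norm k)\<^sup>2"
    unfolding power2_norm_eq_inner inner_add_left inner_add_right inner_scaleR_left
      inner_scaleR_right inner_commute[of k z]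
    by (simp add: power2_eq_square algebra_simps)
  finally show "0 \<le> 2 * t * (z \<bullet> k) + t\<^sup>2 * (norm k)\<^sup>2"
    by simp
qed simp

lemma riesz_representation:
  fixes f :: "'a::{real_inner,complete_space} \<Rightarrow> real"
  assumes "bounded_linear f"
  shows "\<exists>y. \<forall>x. f x = x \<bullet> y"
proof (cases "\<forall>x. f x = 0")
  case True
  then show ?thesis by (intro exI[of _ 0]) simp
next
  case False
  interpret bounded_linear f by fact
  obtain x0 where "f x0 \<noteq> 0"
    using False by blast
  then have "f ((1 / f x0) *\<^sub>R x0) = 1"
    by (simp add: scale)
  moreover have "closed (f -` {1})"
    using assms by (intro continuous_closed_vimage linear_continuous_at) auto
  moreover have "convex (f -` {1})"
    using linear_axioms by (intro convex_linear_vimage) auto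
  ultimately obtain z where z: "f z = 1" and z_min: "\<And>x. f x = 1 \<Longrightarrow> norm z \<le> norm x"
    using closed_convex_has_min_norm[of "f -` {1}"] by blast
  show ?thesis
  proof (intro exI allI)
    fix x
    have "f (x - f x *\<^sub>R z) = 0"
      using z by (simp add: diff scale)
    then have "z \<bullet> (x - f x *\<^sub>R z) = 0"
      using min_norm_orthogonal_kernel[OF bounded_linear.linear[OF assms] z z_min] by blast
    then have "z \<bullet> x = f x * (norm z)\<^sup>2"
      by (simp add: inner_diff_right power2_norm_eq_inner)
    moreover have "z \<noteq> 0"
      using z by auto
    ultimately show "f x = x \<bullet> ((1 / (norm z)\<^sup>2) *\<^sub>R z)"
      by (simp add: inner_commute)
  qed
qed

lemma adjoint_bounded_linear:
  fixes f :: "'a::{real_inner,complete_space} \<Rightarrow> 'b::real_inner"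
  assumes "bounded_linear f"
  shows "f x \<bullet> y = x \<bullet> adjoint f y"
proof -
  have "\<exists>w. \<forall>x. f x \<bullet> y = x \<bullet> w" for y
    using assms by (intro riesz_representation bounded_linear_compose[OF bounded_linear_inner_left])
  then have "\<exists>f'. \<forall>x y. f x \<bullet> y = x \<bullet> f' y"
    by metis
  then show ?thesis
    unfolding adjoint_def by (rule someI_ex[where P = "\<lambda>f'. \<forall>x y. f x \<bullet> y = x \<bullet> f' y", THEN spec, THEN spec])
qed

lemma adjoint_comp:
  fixes f :: "'b::{real_inner,complete_space} \<Rightarrow> 'c::real_inner"
    and g :: "'a::{real_inner,complete_space} \<Rightarrow> 'b"
  assumes "bounded_linear f" "bounded_linear g"
  shows "adjoint (f \<circ> g) = adjoint g \<circ> adjoint f"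
  by (rule adjoint_unique) (simp add: adjoint_bounded_linear[OF assms(1)] adjoint_bounded_linear[OF assms(2)])

lemma adjoint_id: "adjoint (id :: 'a::real_inner \<Rightarrow> 'a) = id"
  by (rule adjoint_unique) simp

lemma adjoint_zero: "adjoint (\<lambda>_::'a::real_inner. 0::'b::real_inner) = (\<lambda>_. 0)"
  by (rule adjoint_unique) simp

lemma linear_adjoint:
  fixes f :: "'a::{real_inner,complete_space} \<Rightarrow> 'b::real_inner"
  assumes "bounded_linear f"
  shows "linear (adjoint f)"
proof
  fix x y :: 'b and c :: real
  show "adjoint f (x + y) = adjoint f x + adjoint f y"
    by (rule vector_eq_ldot[THEN iffD1]) (simp add: inner_add_right adjoint_bounded_linear[OF assms, symmetric])
  show "adjoint f (c *\<^sub>R x) = c *\<^sub>R adjoint f x"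
    by (rule vector_eq_ldot[THEN iffD1]) (simp add: adjoint_bounded_linear[OF assms, symmetric])
qed

section \<open>Alternating sums over subsets\<close>

lemma sum_Pow_alternating:
  assumes "finite A" "A \<noteq> {}"
  shows "(\<Sum>U\<in>Pow A. (-1) ^ card U) = (0::'a::ring_1)"
proof (rule sum_alternating_cancels)
  have "{} \<subset> A" using assms(2) by blast
  then show "card {U. U \<in> Pow A \<and> even (card U)} = card {U. U \<in> Pow A \<and> odd (card U)}"
    using card_subsupersets_even_odd[OF assms(1) \<open>{} \<subset> A\<close>] by simp
qed (use assms in simp)

lemma sum_Pow_insert:
  assumes "finite U" "a \<notin> U"
  shows "(\<Sum>Y\<in>Pow (insert a U). f Y) = (\<Sum>Y\<in>Pow U. f Y) + (\<Sum>Y\<in>Pow U. f (insert a Y))"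
proof -
  have "inj_on (insert a) (Pow U)"
    using assms(2) by (intro inj_onI) (metis PowD insert_ident subsetD)
  moreover have "Pow U \<inter> insert a ` Pow U = {}"
    using assms(2) by auto
  ultimately show ?thesis
    using assms(1) by (simp add: Pow_insert sum.union_disjoint sum.reindex)
qed

text \<open>\<open>mchoose d j\<close> is the number of multisets of size \<open>j\<close> over \<open>d\<close> elements,
  i.e.\ the coefficient of \<open>s ^ j\<close> in \<open>(1 - s) ^ -d\<close>.\<close>

fun mchoose :: "nat \<Rightarrow> nat \<Rightarrow> real" where
  "mchoose 0 j = (if j = 0 then 1 else 0)"
| "mchoose (Suc d) j = (\<Sum>k\<le>j. mchoose d k)"

lemma mchoose_nonneg: "0 \<le> mchoose d j"
  by (induction d arbitrary: j) (auto intro: sum_nonneg)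

lemma mchoose_0_right [simp]: "mchoose d 0 = 1"
  by (induction d) auto

lemma mchoose_Suc_Suc: "mchoose (Suc d) (Suc j) = mchoose (Suc d) j + mchoose d (Suc j)"
  by simp

lemma mchoose_partial_sum_Suc:
  "(1 - s) * (\<Sum>j\<le>N. mchoose (Suc d) j * s ^ j)
     = (\<Sum>j\<le>N. mchoose d j * s ^ j) - mchoose (Suc d) N * s ^ Suc N"
proof (induction N)
  case (Suc N)
  have "(1 - s) * (\<Sum>j\<le>Suc N. mchoose (Suc d) j * s ^ j)
      = (\<Sum>j\<le>N. mchoose d j * s ^ j) - mchoose (Suc d) N * s ^ Suc N
        + (1 - s) * (mchoose (Suc d) (Suc N) * s ^ Suc N)"
    using Suc by (simp only: sum.atMost_Suc distrib_left)
  also have "\<dots> = (\<Sum>j\<le>Suc N. mchoose d j * s ^ j) - mchoose (Suc d) (Suc N) * s ^ Suc (Suc N)"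
    unfolding mchoose_Suc_Suc[of d N] by (simp add: algebra_simps)
  finally show ?case .
qed simp

lemma mchoose_partial_sum_le:
  fixes s :: real
  assumes "0 \<le> s" "s < 1"
  shows "(\<Sum>j\<le>N. mchoose d j * s ^ j) \<le> 1 / (1 - s) ^ d"
proof (induction d)
  case 0
  have "(\<Sum>j\<le>N. mchoose 0 j * s ^ j) = (\<Sum>j\<in>{0}. mchoose 0 j * s ^ j)"
    by (rule sum.mono_neutral_right) auto
  then show ?case by simp
next
  case (Suc d)
  have "(1 - s) * (\<Sum>j\<le>N. mchoose (Suc d) j * s ^ j) \<le> (\<Sum>j\<le>N. mchoose d j * s ^ j)"
    unfolding mchoose_partial_sum_Suc using mchoose_nonneg[of "Suc d" N] assms by simp
  also have "\<dots> \<le> 1 / (1 - s) ^ d"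
    by (rule Suc)
  finally show ?case
    using assms by (simp add: field_simps)
qed

text \<open>Coefficientwise, this is \<open>(1 - s) ^ -d * ((1 - s) - 1) ^ card U = (-s) ^ card U * (1 - s) ^ -d\<close>.\<close>

lemma sum_Pow_alternating_mchoose:
  assumes "finite U" "card U \<le> d"
  shows "(\<Sum>Y\<in>Pow U. (-1) ^ (card U - card Y) * mchoose (d - card Y) j)
       = (if card U \<le> j then (-1) ^ card U * mchoose d (j - card U) else 0)"
  using assms
proof (induction U arbitrary: d j rule: finite_induct)
  case (insert a U)
  then obtain d' where d: "d = Suc d'" and "card U \<le> d'"
    by (cases d) auto
  have card_Y: "card Y \<le> card U" "finite Y" "a \<notin> Y" if "Y \<in> Pow U" for Y
    using that insert.hyps card_mono finite_subset by auto
  let ?g = "\<lambda>Y. (-1) ^ (card (insert a U) - card Y) * mchoose (d - card Y) j"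
  have "(\<Sum>Y\<in>Pow U. ?g Y) = - (\<Sum>Y\<in>Pow U. (-1) ^ (card U - card Y) * mchoose (d - card Y) j)"
    unfolding sum_negf[symmetric] by (rule sum.cong) (use card_Y insert.hyps in \<open>simp_all add: Suc_diff_le\<close>)
  moreover have "(\<Sum>Y\<in>Pow U. ?g (insert a Y))
      = (\<Sum>Y\<in>Pow U. (-1) ^ (card U - card Y) * mchoose (d' - card Y) j)"
    by (rule sum.cong) (use card_Y insert.hyps d in simp_all)
  ultimately have "(\<Sum>Y\<in>Pow (insert a U). ?g Y)
      = - (\<Sum>Y\<in>Pow U. (-1) ^ (card U - card Y) * mchoose (d - card Y) j)
        + (\<Sum>Y\<in>Pow U. (-1) ^ (card U - card Y) * mchoose (d' - card Y) j)"
    using insert.hyps by (simp add: sum_Pow_insert)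
  also have "\<dots> = (if card U \<le> j then (-1) ^ card U * (mchoose d' (j - card U) - mchoose d (j - card U)) else 0)"
    using insert.IH[of d j] insert.IH[of d' j] \<open>card U \<le> d'\<close> d by (simp add: algebra_simps)
  also have "\<dots> = (if card (insert a U) \<le> j then (-1) ^ card (insert a U) * mchoose d (j - card (insert a U)) else 0)"
  proof (cases "card U < j")
    case True
    then have "j - card U = Suc (j - card (insert a U))"
      using insert.hyps by simp
    then show ?thesis
      using True insert.hyps d by simp
  qed (use insert.hyps d in auto)
  finally show ?case .
qed simp

lemma sum_Pow_diff_eq_sum_supersets:
  assumes "finite S" "Y \<subseteq> S"
  shows "(\<Sum>U\<in>Pow (S - Y). f (Y \<union> U) (card U)) = (\<Sum>V\<in>{V \<in> Pow S. Y \<subseteq> V}. f V (card V - card Y))"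
proof (rule sum.reindex_bij_witness[where i = "\<lambda>V. V - Y" and j = "\<lambda>U. Y \<union> U"])
  fix U assume "U \<in> Pow (S - Y)"
  then have "U \<subseteq> S" "Y \<inter> U = {}"
    by auto
  moreover have "finite Y"
    using finite_subset[OF assms(2,1)] .
  ultimately have "card (Y \<union> U) - card Y = card U"
    using finite_subset[OF _ assms(1)] by (simp add: card_Un_disjoint)
  then show "f (Y \<union> U) (card (Y \<union> U) - card Y) = f (Y \<union> U) (card U)"
    by simp
qed (use assms in auto)

section \<open>Words modulo commutation of adjacent letters\<close>

locale simple_graph =
  fixes E :: "nat \<Rightarrow> nat \<Rightarrow> bool"
  assumes sym: "E i j \<Longrightarrow> E j i" and irrefl: "\<not> E i i"
begin

abbreviation weq :: "nat list \<Rightarrow> nat list \<Rightarrow> bool" where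
  "weq \<equiv> word_equiv E"

lemma weq_refl [simp]: "weq w w"
  by (simp add: word_equiv_def)

lemma weq_sym: "weq w v \<Longrightarrow> weq v w"
  unfolding word_equiv_def by (rule rtranclp_symclp_sym)

lemma weq_trans: "weq u v \<Longrightarrow> weq v w \<Longrightarrow> weq u w"
  unfolding word_equiv_def by (rule rtranclp_trans)

lemma weq_swap: "E a b \<Longrightarrow> weq (xs @ [a, b] @ ys) (xs @ [b, a] @ ys)"
  unfolding word_equiv_def by (intro r_into_rtranclp symclpI1 swap_step.intros)

lemma weq_invariant:
  assumes "\<And>w v. swap_step E w v \<Longrightarrow> f w = f v" and "weq w v"
  shows "f w = f v"
  using assms(2) unfolding word_equiv_def
  by (induction rule: rtranclp_induct) (auto simp: symclp_def assms(1))

lemma weq_length: "weq w v \<Longrightarrow> length w = length v"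
  by (rule weq_invariant[where f = length]) (auto elim: swap_step.cases)

lemma weq_set: "weq w v \<Longrightarrow> set w = set v"
  by (rule weq_invariant[where f = set]) (auto elim: swap_step.cases)

lemma weq_append_cong: "weq w w' \<Longrightarrow> weq (u @ w @ v) (u @ w' @ v)"
  unfolding word_equiv_def
proof (induction rule: rtranclp_induct)
  case (step y z)
  have "swap_step E (u @ y @ v) (u @ z @ v)" if "swap_step E y z" for y z
    using that by cases (metis append.assoc swap_step.intros)
  then have "symclp (swap_step E) (u @ y @ v) (u @ z @ v)"
    using step(2) by (auto simp: symclp_def)
  with step(3) show ?case by (rule rtranclp.rtrancl_into_rtrancl)
qed simp

lemma weq_append: "weq u u' \<Longrightarrow> weq v v' \<Longrightarrow> weq (u @ v) (u' @ v')"
  using weq_append_cong[of u u' "[]" v] weq_append_cong[of v v' u' "[]"] by (auto intro: weq_trans)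

lemma weq_Cons: "weq w v \<Longrightarrow> weq (a # w) (a # v)"
  using weq_append[of "[a]" "[a]" w v] by simp

lemma weq_move_letter: "(\<forall>c\<in>set u. E c a) \<Longrightarrow> weq (u @ [a]) (a # u)"
proof (induction u)
  case (Cons c u)
  then have "weq (c # u @ [a]) (c # a # u)"
    by (auto intro: weq_Cons)
  moreover have "weq ([] @ [c, a] @ u) ([] @ [a, c] @ u)"
    using Cons.prems by (intro weq_swap) simp
  ultimately show ?case
    using weq_trans by simp
qed simp

text \<open>Projection lemma for partially commutative monoids: two words are equivalent iff
  their projections onto every pair of non-commuting letters agree.\<close>

definition pair_proj :: "nat \<Rightarrow> nat \<Rightarrow> nat list \<Rightarrow> nat list" where
  "pair_proj a b = filter (\<lambda>x. x = a \<or> x = b)"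

lemma weq_pair_proj:
  assumes "weq w v" and "\<not> E a b"
  shows "pair_proj a b w = pair_proj a b v"
proof (rule weq_invariant[where f = "pair_proj a b", OF _ assms(1)])
  fix w v assume "swap_step E w v"
  then show "pair_proj a b w = pair_proj a b v"
  proof cases
    case (1 x y xs ys)
    then have "\<not> ((x = a \<or> x = b) \<and> (y = a \<or> y = b))"
      using assms(2) sym irrefl by auto
    then show ?thesis
      using 1 by (auto simp: pair_proj_def)
  qed
qed

lemma pair_proj_eq_Nil:
  assumes "\<forall>a b. \<not> E a b \<longrightarrow> pair_proj a b [] = pair_proj a b v"
  shows "v = []"
proof (rule ccontr)
  assume "v \<noteq> []"
  then have "pair_proj (hd v) (hd v) v \<noteq> []"
    by (cases v) (simp_all add: pair_proj_def)
  moreover have "pair_proj (hd v) (hd v) [] = pair_proj (hd v) (hd v) v"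
    using assms irrefl by blast
  ultimately show False
    by (simp add: pair_proj_def)
qed

lemma pair_proj_eq_Cons:
  assumes pr: "\<forall>x y. \<not> E x y \<longrightarrow> pair_proj x y (a # w) = pair_proj x y v"
  shows "\<exists>v'. weq v (a # v') \<and> (\<forall>x y. \<not> E x y \<longrightarrow> pair_proj x y w = pair_proj x y v')"
proof -
  have "a \<in> set (pair_proj a a v)"
    unfolding pr[rule_format, OF irrefl[of a], symmetric] by (simp add: pair_proj_def)
  then obtain v1 v2 where v: "v = v1 @ a # v2" and a_v1: "a \<notin> set v1"
    by (auto simp: pair_proj_def dest: split_list_first)
  have "E c a" if c: "c \<in> set v1" for c
  proof (rule ccontr)
    assume "\<not> E c a"
    then have "pair_proj a c (a # w) = pair_proj a c v"
      using pr sym by blast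
    moreover have "pair_proj a c v1 \<noteq> []" "set (pair_proj a c v1) \<subseteq> {c}"
      using c a_v1 by (auto simp: pair_proj_def filter_empty_conv)
    then have "hd (pair_proj a c v1) = c" "pair_proj a c v1 \<noteq> []"
      by (auto dest: hd_in_set)
    then have "hd (pair_proj a c v) = c"
      using v by (simp add: pair_proj_def)
    moreover have "hd (pair_proj a c (a # w)) = a"
      by (simp add: pair_proj_def)
    ultimately show False
      using c a_v1 by auto
  qed
  then have v_weq: "weq v (a # v1 @ v2)"
    using weq_append[OF weq_move_letter weq_refl[of v2]] v by simp
  have "pair_proj x y w = pair_proj x y (v1 @ v2)" if "\<not> E x y" for x y
  proof -
    have "pair_proj x y (a # w) = pair_proj x y (a # v1 @ v2)"
      using pr that weq_pair_proj[OF v_weq that] by simp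
    then show ?thesis
      by (simp add: pair_proj_def split: if_splits)
  qed
  with v_weq show ?thesis
    by blast
qed

lemma pair_proj_imp_weq: "(\<forall>a b. \<not> E a b \<longrightarrow> pair_proj a b w = pair_proj a b v) \<Longrightarrow> weq w v"
proof (induction w arbitrary: v)
  case Nil
  then have "v = []"
    by (rule pair_proj_eq_Nil)
  then show ?case
    by simp
next
  case (Cons a w)
  then obtain v' where "weq v (a # v')" "\<forall>x y. \<not> E x y \<longrightarrow> pair_proj x y w = pair_proj x y v'"
    using pair_proj_eq_Cons by blast
  with Cons.IH show ?case
    by (blast intro: weq_Cons weq_sym weq_trans)
qed

lemma weq_iff_pair_proj: "weq w v \<longleftrightarrow> (\<forall>a b. \<not> E a b \<longrightarrow> pair_proj a b w = pair_proj a b v)"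
  using weq_pair_proj pair_proj_imp_weq by blast

lemma weq_append_cancel_right: "weq (u @ w) (v @ w) \<Longrightarrow> weq u v"
  unfolding weq_iff_pair_proj by (simp add: pair_proj_def)

lemma pair_proj_filter: "pair_proj a b (filter P w) = filter P (pair_proj a b w)"
  unfolding pair_proj_def filter_filter by (rule filter_cong) auto

lemma weq_filter: "weq w w' \<Longrightarrow> weq (filter P w) (filter P w')"
  unfolding weq_iff_pair_proj pair_proj_filter by simp

lemma distinct_subset_singleton_unique:
  assumes "distinct xs" "distinct ys" "set xs = set ys" "set xs \<subseteq> {c}"
  shows "xs = ys"
proof -
  have "zs = [] \<or> zs = [c]" if "distinct zs" "set zs \<subseteq> {c}" for zs :: "'a list"
    using that by (cases zs; cases "tl zs") auto
  from this[of xs] this[of ys] show ?thesis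
    using assms by auto
qed

lemma clique_word_weq:
  assumes "is_clique E (set u)" "distinct u" "distinct v" "set u = set v"
  shows "weq u v"
  unfolding weq_iff_pair_proj
proof (intro allI impI)
  fix a b assume "\<not> E a b"
  then obtain c where "set (pair_proj a b u) \<subseteq> {c}"
    using assms(1) unfolding is_clique_def pair_proj_def by (cases "a = b") auto
  then show "pair_proj a b u = pair_proj a b v"
    using assms(2-4) by (intro distinct_subset_singleton_unique) (auto simp: pair_proj_def)
qed

lemma weq_sorted_list_of_clique:
  assumes "is_clique E U" "finite U" "distinct w" "set w = U"
  shows "weq w (sorted_list_of_set U)"
  using assms by (intro clique_word_weq) auto

definition melem :: "nat list \<Rightarrow> nat list set" where
  "melem w = {v. weq w v}"

lemma melem_eq_iff: "melem w = melem v \<longleftrightarrow> weq w v"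
  unfolding melem_def using weq_sym weq_trans by (blast intro: weq_refl)

lemma weq_rep_melem: "weq w (rep (melem w))"
proof -
  have "rep (melem w) \<in> melem w"
    unfolding rep_def by (rule someI[of _ w]) (simp add: melem_def)
  then show ?thesis by (simp add: melem_def)
qed

lemma mlen_melem [simp]: "mlen (melem w) = length w"
  unfolding mlen_def using weq_length[OF weq_rep_melem] by simp

definition elems :: "nat set \<Rightarrow> nat list set set" where
  "elems S = melem ` {w. set w \<subseteq> S}"

lemma finite_elems_mlen_le:
  assumes "finite S"
  shows "finite {p \<in> elems S. mlen p \<le> m}"
proof (rule finite_subset)
  show "{p \<in> elems S. mlen p \<le> m} \<subseteq> melem ` {w. set w \<subseteq> S \<and> length w \<le> m}"
    by (auto simp: elems_def)
  show "finite (melem ` {w. set w \<subseteq> S \<and> length w \<le> m})"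
    using assms by (intro finite_imageI finite_lists_length_le)
qed

definition mult_set :: "nat list set \<Rightarrow> nat set \<Rightarrow> nat list set" where
  "mult_set p U = melem (rep p @ sorted_list_of_set U)"

lemma mult_set_melem: "mult_set (melem w) U = melem (w @ sorted_list_of_set U)"
  unfolding mult_set_def melem_eq_iff by (intro weq_append weq_sym[OF weq_rep_melem] weq_refl)

definition last_letters :: "nat list set \<Rightarrow> nat set" where
  "last_letters q = {a. \<exists>w. q = melem (w @ [a])}"

lemma last_letters_subset: "last_letters (melem w) \<subseteq> set w"
  by (auto simp: last_letters_def melem_eq_iff dest: weq_set)

lemma last_letters_nonempty: "w \<noteq> [] \<Longrightarrow> last_letters (melem w) \<noteq> {}"
  unfolding last_letters_def by (metis (mono_tags) append_butlast_last_id empty_Collect_eq)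

lemma clique_subset_last_letters:
  assumes "is_clique E U" "finite U"
  shows "U \<subseteq> last_letters (melem (w @ sorted_list_of_set U))"
proof
  fix b assume "b \<in> U"
  then have "weq (sorted_list_of_set (U - {b}) @ [b]) (sorted_list_of_set U)"
    using assms by (intro weq_sorted_list_of_clique) auto
  then have "weq ((w @ sorted_list_of_set (U - {b})) @ [b]) (w @ sorted_list_of_set U)"
    using weq_append[OF weq_refl] by simp
  then show "b \<in> last_letters (melem (w @ sorted_list_of_set U))"
    unfolding last_letters_def melem_eq_iff by (blast intro: weq_sym)
qed

lemma weq_snoc_split:
  assumes "weq (w @ v) (w' @ [b])" and "b \<notin> set v"
  shows "\<exists>x z. w = x @ b # z \<and> (\<forall>c\<in>set (z @ v). E b c)"
proof -
  have "b \<in> set w"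
    using weq_set[OF assms(1)] assms(2) by auto
  then obtain x z where w: "w = x @ b # z" and "b \<notin> set z"
    by (meson split_list_last)
  have "E b c" if c: "c \<in> set (z @ v)" for c
  proof (rule ccontr)
    assume "\<not> E b c"
    then have "last (pair_proj b c (w @ v)) = last (pair_proj b c (w' @ [b]))"
      using weq_pair_proj[OF assms(1)] by simp
    moreover have "pair_proj b c (z @ v) \<noteq> []" "set (pair_proj b c (z @ v)) \<subseteq> {c}"
      using c \<open>b \<notin> set z\<close> assms(2) by (auto simp: pair_proj_def filter_empty_conv)
    then have "last (pair_proj b c (z @ v)) = c" "pair_proj b c (z @ v) \<noteq> []"
      by (auto dest: last_in_set)
    then have "last (pair_proj b c (w @ v)) = c"
      using w by (auto simp: pair_proj_def)
    ultimately show False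
      using c \<open>b \<notin> set z\<close> assms(2) by (auto simp: pair_proj_def)
  qed
  with w show ?thesis by blast
qed

lemma subset_last_letters_imp_clique_suffix:
  assumes "finite U" "U \<subseteq> last_letters (melem w0)"
  shows "is_clique E U \<and> (\<exists>w. melem w0 = melem (w @ sorted_list_of_set U))"
  using assms
proof (induction U rule: finite_induct)
  case empty
  show ?case by (auto simp: is_clique_def)
next
  case (insert b U)
  then obtain w1 where "is_clique E U" and w1: "melem w0 = melem (w1 @ sorted_list_of_set U)"
    by auto
  obtain w2 where "melem w0 = melem (w2 @ [b])"
    using insert.prems by (auto simp: last_letters_def)
  with w1 have "melem (w1 @ sorted_list_of_set U) = melem (w2 @ [b])"
    by simp
  then have "weq (w1 @ sorted_list_of_set U) (w2 @ [b])"
    by (simp only: melem_eq_iff)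
  moreover have "b \<notin> set (sorted_list_of_set U)"
    using insert.hyps by simp
  ultimately obtain x z where xz: "w1 = x @ b # z"
    and b_adj: "\<forall>c\<in>set (z @ sorted_list_of_set U). E b c"
    using weq_snoc_split by blast
  have clique: "is_clique E (insert b U)"
    using \<open>is_clique E U\<close> b_adj sym insert.hyps by (auto simp: is_clique_def)
  have "weq (b # z @ sorted_list_of_set U) ((z @ sorted_list_of_set U) @ [b])"
    using b_adj sym by (intro weq_sym[OF weq_move_letter]) blast
  then have "weq (w1 @ sorted_list_of_set U) (x @ z @ sorted_list_of_set U @ [b])"
    using weq_append[OF weq_refl[of x]] xz by simp
  moreover have "weq (sorted_list_of_set U @ [b]) (sorted_list_of_set (insert b U))"
    using clique insert.hyps by (intro weq_sorted_list_of_clique) auto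
  then have "weq (x @ z @ sorted_list_of_set U @ [b]) ((x @ z) @ sorted_list_of_set (insert b U))"
    using weq_append[OF weq_refl[of "x @ z"]] by simp
  ultimately have "melem w0 = melem ((x @ z) @ sorted_list_of_set (insert b U))"
    using w1 by (simp add: melem_eq_iff) (blast intro: weq_trans)
  with clique show ?case by blast
qed

definition splittings :: "nat set \<Rightarrow> nat \<Rightarrow> (nat list set \<times> nat set) set" where
  "splittings S k = {(p, U). p \<in> elems S \<and> U \<subseteq> S \<and> is_clique E U \<and> mlen p + card U = k}"

lemma finite_splittings:
  assumes "finite S"
  shows "finite (splittings S k)"
proof (rule finite_subset)
  show "splittings S k \<subseteq> {p \<in> elems S. mlen p \<le> k} \<times> Pow S"
    by (auto simp: splittings_def)
  show "finite ({p \<in> elems S. mlen p \<le> k} \<times> Pow S)"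
    using assms finite_elems_mlen_le by blast
qed

lemma mult_set_splitting:
  assumes "finite S" "(p, U) \<in> splittings S k"
  shows "\<exists>w. p = melem w \<and> mult_set p U = melem (w @ sorted_list_of_set U)
           \<and> set (w @ sorted_list_of_set U) \<subseteq> S \<and> length (w @ sorted_list_of_set U) = k"
proof -
  obtain w where "p = melem w" "set w \<subseteq> S" "U \<subseteq> S" "mlen p + card U = k"
    using assms(2) by (auto simp: splittings_def elems_def)
  moreover have "finite U"
    using assms(1) \<open>U \<subseteq> S\<close> finite_subset by blast
  ultimately show ?thesis
    by (auto simp: mult_set_melem)
qed

lemma mult_set_cancel_right:
  assumes "p \<in> elems S" "p' \<in> elems S" "mult_set p U = mult_set p' U"
  shows "p = p'"
proof -
  obtain w w' where "p = melem w" "p' = melem w'"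
    using assms(1,2) by (auto simp: elems_def)
  with assms(3) show ?thesis
    by (simp add: mult_set_melem melem_eq_iff weq_append_cancel_right)
qed

lemma last_letters_splitting:
  assumes "finite S" "set w0 \<subseteq> S" "U \<subseteq> last_letters (melem w0)"
  shows "\<exists>p. (p, U) \<in> splittings S (length w0) \<and> mult_set p U = melem w0"
proof -
  have "U \<subseteq> S"
    using assms(2,3) last_letters_subset[of w0] by blast
  then have "finite U"
    using assms(1) by (rule finite_subset)
  then obtain w where "is_clique E U" and w: "melem w0 = melem (w @ sorted_list_of_set U)"
    using subset_last_letters_imp_clique_suffix[OF _ assms(3)] by blast
  then have w0_weq: "weq w0 (w @ sorted_list_of_set U)"
    by (simp add: melem_eq_iff)
  have "set w \<subseteq> S" "length w0 = mlen (melem w) + card U"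
    using weq_set[OF w0_weq] weq_length[OF w0_weq] assms(2) \<open>finite U\<close> by auto
  with \<open>U \<subseteq> S\<close> \<open>is_clique E U\<close> w show ?thesis
    by (auto simp: splittings_def elems_def mult_set_melem)
qed

lemma splitting_fibre_bij:
  assumes "finite S" "set w0 \<subseteq> S"
  shows "bij_betw snd {x \<in> splittings S (length w0). case_prod mult_set x = melem w0}
           (Pow (last_letters (melem w0)))" (is "bij_betw snd ?F _")
proof (rule bij_betwI')
  fix x y assume "x \<in> ?F" "y \<in> ?F"
  then obtain p U p' U' where "x = (p, U)" "y = (p', U')" "p \<in> elems S" "p' \<in> elems S"
      "mult_set p U = melem w0" "mult_set p' U' = melem w0"
    by (cases x; cases y) (auto simp: splittings_def)
  then show "snd x = snd y \<longleftrightarrow> x = y"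
    using mult_set_cancel_right[of p S p' U] by auto
next
  fix x assume "x \<in> ?F"
  then obtain p U where x: "x = (p, U)" "(p, U) \<in> splittings S (length w0)"
      "mult_set p U = melem w0"
    by (cases x) auto
  then have "is_clique E U" "finite U"
    using assms(1) finite_subset by (auto simp: splittings_def)
  moreover obtain w where "mult_set p U = melem (w @ sorted_list_of_set U)"
    using mult_set_splitting[OF assms(1) x(2)] by blast
  ultimately show "snd x \<in> Pow (last_letters (melem w0))"
    using x(1,3) clique_subset_last_letters by auto
next
  fix U assume "U \<in> Pow (last_letters (melem w0))"
  then show "\<exists>x\<in>?F. U = snd x"
    using last_letters_splitting[OF assms] by force
qed

lemma mult_set_splitting_mem:
  assumes "finite S" "(p, U) \<in> splittings S k"
  shows "mult_set p U \<in> {q \<in> elems S. mlen q = k}"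
  using mult_set_splitting[OF assms] by (auto simp: elems_def)

text \<open>Moebius inversion: grouped by \<open>q = mult_set p U\<close>, the pairs over \<open>q\<close> correspond to the
  subsets of the nonempty set of last letters of \<open>q\<close>, so every group sums to zero.\<close>

lemma alternating_splitting_sum:
  fixes f :: "nat list set \<Rightarrow> real"
  assumes "finite S" "k \<ge> 1"
  shows "(\<Sum>(p, U)\<in>splittings S k. (-1) ^ card U * f (mult_set p U)) = 0"
proof -
  let ?Q = "{q \<in> elems S. mlen q = k}"
  let ?fibre = "\<lambda>q. {x \<in> splittings S k. case_prod mult_set x = q}"
  have "finite ?Q"
    using finite_elems_mlen_le[OF assms(1), of k] by (rule finite_subset[rotated]) auto
  have "(\<Sum>(p, U)\<in>splittings S k. (-1) ^ card U * f (mult_set p U))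
      = (\<Sum>q\<in>?Q. \<Sum>(p, U)\<in>?fibre q. (-1) ^ card U * f (mult_set p U))"
    by (rule sum.group[symmetric])
      (use finite_splittings[OF assms(1)] \<open>finite ?Q\<close> mult_set_splitting_mem[OF assms(1)] in
        \<open>auto split: prod.splits\<close>)
  also have "\<dots> = (\<Sum>q\<in>?Q. 0)"
  proof (rule sum.cong[OF refl])
    fix q assume "q \<in> ?Q"
    then obtain w0 where q: "q = melem w0" and w0: "set w0 \<subseteq> S" "length w0 = k"
      by (auto simp: elems_def)
    have "last_letters q \<subseteq> S"
      using q w0(1) last_letters_subset by blast
    then have "finite (last_letters q)"
      using assms(1) by (rule finite_subset)
    have "w0 \<noteq> []"
      using w0(2) assms(2) by auto
    then have "last_letters q \<noteq> {}"
      using q last_letters_nonempty by blast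
    have "(\<Sum>(p, U)\<in>?fibre q. (-1) ^ card U * f (mult_set p U))
        = (\<Sum>x\<in>?fibre q. (-1) ^ card (snd x) * f q)"
      by (rule sum.cong) auto
    also have "\<dots> = (\<Sum>U\<in>Pow (last_letters q). (-1) ^ card U) * f q"
      using sum.reindex_bij_betw[OF splitting_fibre_bij[OF assms(1) w0(1)],
          of "\<lambda>U. (-1) ^ card U * f q"] q w0(2)
      by (simp add: sum_distrib_right)
    also have "\<dots> = 0"
      using \<open>finite (last_letters q)\<close> \<open>last_letters q \<noteq> {}\<close> by (simp add: sum_Pow_alternating)
    finally show "(\<Sum>(p, U)\<in>?fibre q. (-1) ^ card U * f (mult_set p U)) = 0" .
  qed
  finally show ?thesis by simp
qed

lemma sum_splittings_regroup:
  assumes "finite S"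
  shows "(\<Sum>p\<in>{p \<in> elems S. mlen p \<le> m}. \<Sum>U\<in>{U \<in> Pow S. is_clique E U \<and> card U \<le> m - mlen p}. g p U)
    = (\<Sum>k\<le>m. \<Sum>(p, U)\<in>splittings S k. g p U)"
proof -
  let ?P = "{p \<in> elems S. mlen p \<le> m}"
  let ?C = "\<lambda>p. {U \<in> Pow S. is_clique E U \<and> card U \<le> m - mlen p}"
  have fin: "finite ?P" "finite (Sigma ?P ?C)"
    using assms finite_elems_mlen_le by auto
  have "(\<Sum>p\<in>?P. \<Sum>U\<in>?C p. g p U) = (\<Sum>(p, U)\<in>Sigma ?P ?C. g p U)"
    using fin assms by (intro sum.Sigma) auto
  also have "\<dots> = (\<Sum>k\<le>m. \<Sum>(p, U)\<in>{x \<in> Sigma ?P ?C. mlen (fst x) + card (snd x) = k}. g p U)"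
    by (rule sum.group[symmetric]) (use fin in auto)
  also have "\<dots> = (\<Sum>k\<le>m. \<Sum>(p, U)\<in>splittings S k. g p U)"
  proof (rule sum.cong[OF refl])
    fix k assume "k \<in> {..m}"
    then have "{x \<in> Sigma ?P ?C. mlen (fst x) + card (snd x) = k} = splittings S k"
      by (auto simp: splittings_def)
    then show "(\<Sum>(p, U)\<in>{x \<in> Sigma ?P ?C. mlen (fst x) + card (snd x) = k}. g p U)
        = (\<Sum>(p, U)\<in>splittings S k. g p U)"
      by (rule arg_cong)
  qed
  finally show ?thesis .
qed

lemma weq_split_commuting:
  assumes "set w \<subseteq> A \<union> B" "A \<inter> B = {}" "\<forall>a\<in>A. \<forall>b\<in>B. E a b"
  shows "weq w (filter (\<lambda>x. x \<in> A) w @ filter (\<lambda>x. x \<in> B) w)"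
  using assms(1)
proof (induction w)
  case (Cons c w)
  then have IH: "weq (c # w) (c # filter (\<lambda>x. x \<in> A) w @ filter (\<lambda>x. x \<in> B) w)"
    by (simp add: weq_Cons)
  show ?case
  proof (cases "c \<in> A")
    case True
    with assms(2) IH show ?thesis
      by auto
  next
    case False
    with Cons.prems have "c \<in> B"
      by simp
    with assms(3) have "weq (c # filter (\<lambda>x. x \<in> A) w) (filter (\<lambda>x. x \<in> A) w @ [c])"
      by (intro weq_sym[OF weq_move_letter]) auto
    then have "weq (c # filter (\<lambda>x. x \<in> A) w @ filter (\<lambda>x. x \<in> B) w)
        (filter (\<lambda>x. x \<in> A) w @ c # filter (\<lambda>x. x \<in> B) w)"
      using weq_append[OF _ weq_refl] by fastforce
    with IH False \<open>c \<in> B\<close> show ?thesis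
      by (auto intro: weq_trans)
  qed
qed simp

definition restrict_elem :: "nat set \<Rightarrow> nat list set \<Rightarrow> nat list set" where
  "restrict_elem A q = melem (filter (\<lambda>x. x \<in> A) (rep q))"

lemma restrict_elem_melem: "restrict_elem A (melem w) = melem (filter (\<lambda>x. x \<in> A) w)"
  unfolding restrict_elem_def melem_eq_iff by (intro weq_filter weq_sym[OF weq_rep_melem])

lemma restrict_elem_in_elems: "q \<in> elems S \<Longrightarrow> restrict_elem A q \<in> elems A"
  by (auto simp: elems_def restrict_elem_melem)

lemma inj_on_restrict_elem:
  assumes "A \<inter> B = {}" "\<forall>a\<in>A. \<forall>b\<in>B. E a b"
  shows "inj_on (\<lambda>q. (restrict_elem A q, restrict_elem B q)) (elems (A \<union> B))"
proof (rule inj_onI)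
  fix q q' assume "q \<in> elems (A \<union> B)" "q' \<in> elems (A \<union> B)"
    and eq: "(restrict_elem A q, restrict_elem B q) = (restrict_elem A q', restrict_elem B q')"
  then obtain w w' where w: "q = melem w" "set w \<subseteq> A \<union> B" and w': "q' = melem w'" "set w' \<subseteq> A \<union> B"
    by (auto simp: elems_def)
  have "weq w (filter (\<lambda>x. x \<in> A) w @ filter (\<lambda>x. x \<in> B) w)"
    "weq w' (filter (\<lambda>x. x \<in> A) w' @ filter (\<lambda>x. x \<in> B) w')"
    using w(2) w'(2) assms by (auto intro: weq_split_commuting)
  moreover have "weq (filter (\<lambda>x. x \<in> A) w @ filter (\<lambda>x. x \<in> B) w)
      (filter (\<lambda>x. x \<in> A) w' @ filter (\<lambda>x. x \<in> B) w')"
    using eq w w' by (intro weq_append) (simp_all add: restrict_elem_melem melem_eq_iff)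
  ultimately show "q = q'"
    using w w' by (simp add: melem_eq_iff) (blast intro: weq_trans weq_sym)
qed

end

section \<open>The components of the complement graph\<close>

lemma is_clique_union_imp_subset_nbhd:
  assumes "is_clique E (Y \<union> U)" "U \<subseteq> S - Y"
  shows "U \<subseteq> nbhd E S Y"
proof
  fix j assume "j \<in> U"
  with assms(2) have "j \<in> S" "j \<notin> Y"
    by auto
  moreover have "E j k" if "k \<in> Y" for k
  proof -
    have "j \<noteq> k"
      using \<open>j \<notin> Y\<close> that by blast
    with assms(1) \<open>j \<in> U\<close> that show ?thesis
      unfolding is_clique_def by blast
  qed
  ultimately show "j \<in> nbhd E S Y"
    by (simp add: nbhd_def)
qed

definition clique_number_on :: "(nat \<Rightarrow> nat \<Rightarrow> bool) \<Rightarrow> nat set \<Rightarrow> nat" where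
  "clique_number_on E S = Max (card ` {W. W \<subseteq> S \<and> is_clique E W})"

lemma clique_number_conv_on: "clique_number n E = clique_number_on E {1..n}"
  by (simp add: clique_number_def clique_number_on_def)

lemma finite_cliques: "finite S \<Longrightarrow> finite {W. W \<subseteq> S \<and> is_clique E W}"
  by (rule finite_subset[of _ "Pow S"]) auto

lemma card_le_clique_number_on:
  "finite S \<Longrightarrow> W \<subseteq> S \<Longrightarrow> is_clique E W \<Longrightarrow> card W \<le> clique_number_on E S"
  unfolding clique_number_on_def by (intro Max_ge finite_imageI finite_cliques) auto

lemma clique_number_on_attained:
  assumes "finite S"
  shows "\<exists>W. W \<subseteq> S \<and> is_clique E W \<and> card W = clique_number_on E S"
proof -
  have "{W. W \<subseteq> S \<and> is_clique E W} \<noteq> {}"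
    by (auto simp: is_clique_def)
  then have "clique_number_on E S \<in> card ` {W. W \<subseteq> S \<and> is_clique E W}"
    unfolding clique_number_on_def using assms by (intro Max_in finite_imageI finite_cliques) auto
  then show ?thesis by auto
qed

context simple_graph
begin

lemma equivp_compl_edge_rtranclp: "equivp (compl_edge n E)\<^sup>*\<^sup>*"
  by (rule equivp_rtranclp) (auto simp: symp_def compl_edge_def sym)

lemma compl_edge_rtranclp_eq:
  "(compl_edge n E)\<^sup>*\<^sup>* i j \<Longrightarrow> (compl_edge n E)\<^sup>*\<^sup>* i = (compl_edge n E)\<^sup>*\<^sup>* j"
  using equivp_compl_edge_rtranclp by (simp add: equivp_def)

lemma compl_components_subset: "V \<in> compl_components n E \<Longrightarrow> V \<subseteq> {1..n}"
proof -
  have "j \<in> {1..n}" if "(compl_edge n E)\<^sup>*\<^sup>* i j" "i \<in> {1..n}" for i j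
    using that by (induction rule: rtranclp_induct) (auto simp: compl_edge_def)
  then show "V \<in> compl_components n E \<Longrightarrow> V \<subseteq> {1..n}"
    by (auto simp: compl_components_def)
qed

lemma Union_compl_components: "\<Union>(compl_components n E) = {1..n}"
  using compl_components_subset by (auto simp: compl_components_def)

lemma compl_components_disjoint:
  assumes "V \<in> compl_components n E" "V' \<in> compl_components n E" "V \<noteq> V'"
  shows "V \<inter> V' = {}"
proof (rule ccontr)
  assume "V \<inter> V' \<noteq> {}"
  obtain i i' where V: "V = {j. (compl_edge n E)\<^sup>*\<^sup>* i j}" and V': "V' = {j. (compl_edge n E)\<^sup>*\<^sup>* i' j}"
    using assms(1,2) by (auto simp: compl_components_def)
  with \<open>V \<inter> V' \<noteq> {}\<close> obtain j where "(compl_edge n E)\<^sup>*\<^sup>* i j" "(compl_edge n E)\<^sup>*\<^sup>* i' j"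
    by auto
  then have "(compl_edge n E)\<^sup>*\<^sup>* i = (compl_edge n E)\<^sup>*\<^sup>* i'"
    using compl_edge_rtranclp_eq by metis
  with V V' assms(3) show False
    by simp
qed

lemma compl_components_adjacent:
  assumes "V \<in> compl_components n E" "V' \<in> compl_components n E" "V \<noteq> V'" "a \<in> V" "b \<in> V'"
  shows "E a b"
proof (rule ccontr)
  assume "\<not> E a b"
  moreover have "a \<noteq> b" "a \<in> {1..n}" "b \<in> {1..n}"
    using assms compl_components_disjoint compl_components_subset by blast+
  ultimately have "compl_edge n E a b"
    by (simp add: compl_edge_def)
  obtain i where V: "V = {j. (compl_edge n E)\<^sup>*\<^sup>* i j}"
    using assms(1) by (auto simp: compl_components_def)
  with assms(4) \<open>compl_edge n E a b\<close> have "b \<in> V"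
    by (simp add: rtranclp.rtrancl_into_rtrancl)
  with assms(2,3,5) show False
    using compl_components_disjoint[OF assms(1-3)] by blast
qed

lemma is_clique_Union_compl_components:
  assumes "\<And>V. V \<in> compl_components n E \<Longrightarrow> W V \<subseteq> V \<and> is_clique E (W V)"
  shows "is_clique E (\<Union>(W ` compl_components n E))"
  unfolding is_clique_def
proof (intro ballI impI)
  fix i j assume "i \<in> \<Union>(W ` compl_components n E)" "j \<in> \<Union>(W ` compl_components n E)" "i \<noteq> j"
  then obtain V V' where V: "V \<in> compl_components n E" "V' \<in> compl_components n E"
    and "i \<in> W V" "j \<in> W V'"
    by blast
  show "E i j"
  proof (cases "V = V'")
    case True
    with assms[OF V(1)] \<open>i \<in> W V\<close> \<open>j \<in> W V'\<close> \<open>i \<noteq> j\<close> show ?thesis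
      by (auto simp: is_clique_def)
  next
    case False
    with assms V \<open>i \<in> W V\<close> \<open>j \<in> W V'\<close> show ?thesis
      by (meson compl_components_adjacent subsetD)
  qed
qed

lemma sum_clique_number_on_compl_components:
  "(\<Sum>V\<in>compl_components n E. clique_number_on E V) \<le> clique_number n E"
proof -
  let ?C = "compl_components n E"
  have fin: "finite V" if "V \<in> ?C" for V
    using compl_components_subset[OF that] by (rule finite_subset[OF _ finite_atLeastAtMost])
  then have "\<forall>V\<in>?C. \<exists>W. W \<subseteq> V \<and> is_clique E W \<and> card W = clique_number_on E V"
    using clique_number_on_attained by blast
  then obtain W where W: "\<And>V. V \<in> ?C \<Longrightarrow> W V \<subseteq> V \<and> is_clique E (W V) \<and> card (W V) = clique_number_on E V"
    by metis
  then have "is_clique E (\<Union>(W ` ?C))" "\<Union>(W ` ?C) \<subseteq> {1..n}"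
    using is_clique_Union_compl_components compl_components_subset by blast+
  then have "card (\<Union>(W ` ?C)) \<le> clique_number n E"
    by (simp add: clique_number_conv_on card_le_clique_number_on)
  moreover have "card (\<Union>(W ` ?C)) = (\<Sum>V\<in>?C. card (W V))"
  proof (rule card_UN_disjoint)
    show "finite ?C"
      by (simp add: compl_components_def)
    show "\<forall>V\<in>?C. finite (W V)"
      using W fin finite_subset by blast
    show "\<forall>V\<in>?C. \<forall>V'\<in>?C. V \<noteq> V' \<longrightarrow> W V \<inter> W V' = {}"
      using W compl_components_disjoint by blast
  qed
  ultimately show ?thesis
    using W by simp
qed

end

section \<open>Operators of a \<open>\<Gamma>\<close>-family\<close>

lemma word_op_Nil [simp]: "word_op T [] = id"
  by (simp add: word_op_def)

lemma word_op_append: "word_op T (u @ v) = word_op T u \<circ> word_op T v"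
proof -
  have "foldr (\<lambda>i f. T i \<circ> f) u g = word_op T u \<circ> g" for g
    by (induction u arbitrary: g) (auto simp: word_op_def)
  then show ?thesis
    by (simp add: word_op_def)
qed

lemma word_op_Cons: "word_op T (a # w) = T a \<circ> word_op T w"
  using word_op_append[of T "[a]" w] by (simp add: word_op_def)

locale gamma_representation = simple_graph E for E :: "nat \<Rightarrow> nat \<Rightarrow> bool" +
  fixes n :: nat and T :: "nat \<Rightarrow> 'a::{real_inner,complete_space} \<Rightarrow> 'a"
  assumes family: "gamma_family n E T"
begin

lemma bounded_linear_T: "i \<in> {1..n} \<Longrightarrow> bounded_linear (T i)"
  using family by (simp add: gamma_family_def)

lemma T_commute: "i \<in> {1..n} \<Longrightarrow> j \<in> {1..n} \<Longrightarrow> E i j \<Longrightarrow> T i \<circ> T j = T j \<circ> T i"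
  using family unfolding gamma_family_def by blast

lemma bounded_linear_word_op: "set w \<subseteq> {1..n} \<Longrightarrow> bounded_linear (word_op T w)"
proof (induction w)
  case Nil
  then show ?case by (simp add: id_def bounded_linear_ident)
next
  case (Cons a w)
  then have "bounded_linear (T a)"
    by (simp add: bounded_linear_T)
  with Cons show ?case
    by (simp add: word_op_Cons bounded_linear_compose o_def)
qed

lemma word_op_weq:
  assumes "set w \<subseteq> {1..n}" "weq w v"
  shows "word_op T w = word_op T v"
proof -
  \<comment> \<open>\<open>T i\<close> and \<open>T j\<close> are only known to commute for \<open>i, j \<in> {1..n}\<close>, hence the guard\<close>
  let ?f = "\<lambda>w. if set w \<subseteq> {1..n} then Some (word_op T w) else None"
  have "?f w = ?f v"
  proof (rule weq_invariant[OF _ assms(2)])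
    fix w v assume "swap_step E w v"
    then show "?f w = ?f v"
    proof cases
      case (1 a b xs ys)
      show ?thesis
      proof (cases "set w \<subseteq> {1..n}")
        case True
        then have "a \<in> {1..n}" "b \<in> {1..n}"
          using 1 by auto
        then have "T a \<circ> (T b \<circ> word_op T ys) = T b \<circ> (T a \<circ> word_op T ys)"
          using T_commute[OF _ _ \<open>E a b\<close>] by (simp add: fun_eq_iff)
        with 1 True show ?thesis
          by (simp add: word_op_append word_op_Cons)
      qed (use 1 in auto)
    qed
  qed
  with assms(1) show ?thesis
    by (auto split: if_splits)
qed

lemma mon_op_melem: "set w \<subseteq> {1..n} \<Longrightarrow> mon_op T (melem w) = word_op T w"
  unfolding mon_op_def using word_op_weq[OF _ weq_rep_melem[of w]] by simp

lemma bounded_linear_mon_op: "p \<in> elems S \<Longrightarrow> S \<subseteq> {1..n} \<Longrightarrow> bounded_linear (mon_op T p)"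
  by (auto simp: elems_def mon_op_melem bounded_linear_word_op)

lemma adjoint_mon_op_append:
  assumes "set u \<subseteq> {1..n}" "set v \<subseteq> {1..n}"
  shows "adjoint (mon_op T (melem (u @ v))) = adjoint (mon_op T (melem v)) \<circ> adjoint (mon_op T (melem u))"
  using assms by (simp add: mon_op_melem word_op_append adjoint_comp bounded_linear_word_op)

lemma join_op_clique: "is_clique E U \<Longrightarrow> join_op E T U = word_op T (sorted_list_of_set U)"
  by (simp add: join_op_def)

lemma bounded_linear_join_op: "U \<subseteq> {1..n} \<Longrightarrow> bounded_linear (join_op E T U)"
  using finite_subset[of U "{1..n}"] bounded_linear_word_op[of "sorted_list_of_set U"]
  by (auto simp: join_op_def bounded_linear_zero)

definition join_norm2 :: "nat set \<Rightarrow> 'a \<Rightarrow> real" where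
  "join_norm2 U y = (norm (adjoint (join_op E T U) y))\<^sup>2"

lemma join_norm2_nonclique: "\<not> is_clique E U \<Longrightarrow> join_norm2 U y = 0"
  by (simp add: join_norm2_def join_op_def adjoint_zero)

lemma join_norm2_empty: "join_norm2 {} y = (norm y)\<^sup>2"
  by (simp add: join_norm2_def join_op_def is_clique_def adjoint_id)

lemma join_norm2_zero: "U \<subseteq> {1..n} \<Longrightarrow> join_norm2 U 0 = 0"
  using linear_0[OF linear_adjoint[OF bounded_linear_join_op]] by (simp add: join_norm2_def)

lemma join_norm2_mult_set:
  assumes "S \<subseteq> {1..n}" "p \<in> elems S" "U \<subseteq> S" "is_clique E U"
  shows "(norm (adjoint (mon_op T (mult_set p U)) h))\<^sup>2 = join_norm2 U (adjoint (mon_op T p) h)"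
proof -
  obtain w where w: "p = melem w" "set w \<subseteq> {1..n}"
    using assms(1,2) by (auto simp: elems_def)
  have "finite U"
    using assms(1,3) finite_subset[OF _ finite_atLeastAtMost] by blast
  then have "set (sorted_list_of_set U) \<subseteq> {1..n}"
    using assms(1,3) by auto
  then show ?thesis
    using w adjoint_mon_op_append[of w "sorted_list_of_set U"] \<open>finite U\<close> assms(4)
    by (simp add: mult_set_melem join_norm2_def join_op_clique mon_op_melem)
qed

lemma splittings_0:
  assumes "finite S"
  shows "splittings S 0 = {(melem [], {})}"
proof -
  have "U = {}" if "U \<subseteq> S" "card U = 0" for U
    using that assms by (meson card_0_eq finite_subset)
  then show ?thesis
    by (auto simp: splittings_def elems_def is_clique_def)
qed

lemma alternating_splitting_sum_join_norm2:
  assumes "S \<subseteq> {1..n}"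
  shows "(\<Sum>(p, U)\<in>splittings S k. (-1) ^ card U * join_norm2 U (adjoint (mon_op T p) h))
    = (if k = 0 then (norm h)\<^sup>2 else 0)"
proof -
  have "finite S"
    using assms by (rule finite_subset[OF _ finite_atLeastAtMost])
  show ?thesis
  proof (cases "k = 0")
    case True
    then show ?thesis
      using \<open>finite S\<close> mon_op_melem[of "[]"] by (simp add: splittings_0 join_norm2_empty adjoint_id)
  next
    case False
    have "(\<Sum>(p, U)\<in>splittings S k. (-1) ^ card U * join_norm2 U (adjoint (mon_op T p) h))
        = (\<Sum>(p, U)\<in>splittings S k. (-1) ^ card U * (norm (adjoint (mon_op T (mult_set p U)) h))\<^sup>2)"
      using join_norm2_mult_set[OF assms] by (intro sum.cong) (auto simp: splittings_def)
    also have "\<dots> = 0"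
      using \<open>finite S\<close> False by (intro alternating_splitting_sum) auto
    finally show ?thesis
      using False by simp
  qed
qed

lemma join_op_union:
  assumes "Y \<union> U \<subseteq> {1..n}" "is_clique E (Y \<union> U)" "Y \<inter> U = {}"
  shows "join_op E T (Y \<union> U) = join_op E T Y \<circ> join_op E T U"
proof -
  have fin: "finite Y" "finite U"
    using assms(1) finite_subset[OF _ finite_atLeastAtMost] by blast+
  with assms(2,3) have "weq (sorted_list_of_set Y @ sorted_list_of_set U) (sorted_list_of_set (Y \<union> U))"
    by (intro weq_sorted_list_of_clique) auto
  moreover have "set (sorted_list_of_set Y @ sorted_list_of_set U) \<subseteq> {1..n}"
    using fin assms(1) by auto
  ultimately have "word_op T (sorted_list_of_set Y @ sorted_list_of_set U)
      = word_op T (sorted_list_of_set (Y \<union> U))"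
    by (rule word_op_weq[rotated])
  moreover have "is_clique E Y" "is_clique E U"
    using assms(2) by (auto simp: is_clique_def)
  ultimately show ?thesis
    using assms(2) by (simp add: join_op_clique word_op_append)
qed

lemma join_norm2_union:
  assumes "S \<subseteq> {1..n}" "Y \<subseteq> S" "is_clique E Y" "U \<subseteq> nbhd E S Y"
  shows "join_norm2 U (adjoint (join_op E T Y) y) = join_norm2 (Y \<union> U) y"
proof (cases "is_clique E U")
  case False
  then have "\<not> is_clique E (Y \<union> U)"
    by (auto simp: is_clique_def)
  with False show ?thesis
    by (simp add: join_norm2_nonclique)
next
  case True
  have "U \<subseteq> S" and adj: "\<forall>j\<in>U. \<forall>k\<in>Y. E j k"
    using assms(4) by (auto simp: nbhd_def)
  then have "Y \<union> U \<subseteq> {1..n}" "is_clique E (Y \<union> U)"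
    using assms(1-3) True sym by (auto simp: is_clique_def)
  moreover have "Y \<inter> U = {}"
    using adj irrefl by blast
  ultimately have "join_op E T (Y \<union> U) = join_op E T Y \<circ> join_op E T U"
    by (rule join_op_union)
  with \<open>Y \<union> U \<subseteq> {1..n}\<close> show ?thesis
    by (simp add: join_norm2_def adjoint_comp bounded_linear_join_op)
qed

section \<open>The bound on a single component\<close>

definition brehmer_positive :: "nat set \<Rightarrow> bool" where
  "brehmer_positive S \<longleftrightarrow> (\<forall>Y z. Y \<subseteq> S \<and> is_clique E Y \<longrightarrow>
     0 \<le> (\<Sum>U\<in>Pow (nbhd E S Y). (-1) ^ card U * join_norm2 U z))"

lemma weak_brehmer_imp_brehmer_positive:
  assumes "weak_brehmer n E T" "V \<in> compl_components n E"
  shows "brehmer_positive V"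
  unfolding brehmer_positive_def
proof (intro allI impI)
  fix Y z assume "Y \<subseteq> V \<and> is_clique E Y"
  with assms have "positive_op (\<lambda>h. \<Sum>U\<in>Pow (nbhd E V Y). (-1) ^ card U *\<^sub>R join_op E T U (adjoint (join_op E T U) h))"
    unfolding weak_brehmer_def by blast
  then have "0 \<le> (\<Sum>U\<in>Pow (nbhd E V Y). (-1) ^ card U *\<^sub>R join_op E T U (adjoint (join_op E T U) z)) \<bullet> z"
    unfolding positive_op_def by blast
  also have "\<dots> = (\<Sum>U\<in>Pow (nbhd E V Y). (-1) ^ card U * join_norm2 U z)"
    unfolding inner_sum_left
  proof (rule sum.cong[OF refl])
    fix U assume "U \<in> Pow (nbhd E V Y)"
    then have "U \<subseteq> {1..n}"
      using compl_components_subset[OF assms(2)] by (auto simp: nbhd_def)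
    then show "((-1) ^ card U *\<^sub>R join_op E T U (adjoint (join_op E T U) z)) \<bullet> z
        = (-1) ^ card U * join_norm2 U z"
      by (simp add: join_norm2_def adjoint_bounded_linear bounded_linear_join_op power2_norm_eq_inner)
  qed
  finally show "0 \<le> (\<Sum>U\<in>Pow (nbhd E V Y). (-1) ^ card U * join_norm2 U z)" .
qed

definition brehmer_sum :: "nat set \<Rightarrow> nat set \<Rightarrow> 'a \<Rightarrow> real" where
  "brehmer_sum S Y y = (\<Sum>U\<in>Pow (nbhd E S Y). (-1) ^ card U * join_norm2 U (adjoint (join_op E T Y) y))"

lemma brehmer_sum_nonclique:
  assumes "S \<subseteq> {1..n}" "\<not> is_clique E Y"
  shows "brehmer_sum S Y y = 0"
  unfolding brehmer_sum_def
proof (intro sum.neutral ballI)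
  fix U assume "U \<in> Pow (nbhd E S Y)"
  then have "U \<subseteq> {1..n}"
    using assms(1) by (auto simp: nbhd_def)
  then show "(-1) ^ card U * join_norm2 U (adjoint (join_op E T Y) y) = 0"
    using assms(2) by (simp add: join_op_def adjoint_zero join_norm2_zero)
qed

lemma brehmer_sum_nonneg:
  assumes "brehmer_positive S" "S \<subseteq> {1..n}" "Y \<subseteq> S"
  shows "0 \<le> brehmer_sum S Y y"
proof (cases "is_clique E Y")
  case True
  with assms(1,3) have "0 \<le> (\<Sum>U\<in>Pow (nbhd E S Y). (-1) ^ card U * join_norm2 U z)" for z
    unfolding brehmer_positive_def by blast
  then show ?thesis
    unfolding brehmer_sum_def by blast
qed (simp add: brehmer_sum_nonclique[OF assms(2)])

lemma brehmer_sum_eq: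
  assumes "S \<subseteq> {1..n}" "Y \<subseteq> S"
  shows "brehmer_sum S Y y = (\<Sum>U\<in>Pow (S - Y). (-1) ^ card U * join_norm2 (Y \<union> U) y)"
proof (cases "is_clique E Y")
  case False
  then have "\<not> is_clique E (Y \<union> U)" for U
    by (auto simp: is_clique_def)
  then show ?thesis
    by (simp add: brehmer_sum_nonclique[OF assms(1) False] join_norm2_nonclique)
next
  case True
  have "finite S"
    using assms(1) by (rule finite_subset[OF _ finite_atLeastAtMost])
  have "nbhd E S Y \<subseteq> S - Y"
    using irrefl by (auto simp: nbhd_def)
  have "(\<Sum>U\<in>Pow (nbhd E S Y). (-1) ^ card U * join_norm2 (Y \<union> U) y)
      = (\<Sum>U\<in>Pow (S - Y). (-1) ^ card U * join_norm2 (Y \<union> U) y)"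
  proof (rule sum.mono_neutral_left)
    show "finite (Pow (S - Y))"
      using \<open>finite S\<close> by simp
    show "Pow (nbhd E S Y) \<subseteq> Pow (S - Y)"
      using \<open>nbhd E S Y \<subseteq> S - Y\<close> by blast
    show "\<forall>U\<in>Pow (S - Y) - Pow (nbhd E S Y). (-1) ^ card U * join_norm2 (Y \<union> U) y = 0"
    proof
      fix U assume "U \<in> Pow (S - Y) - Pow (nbhd E S Y)"
      then have "\<not> is_clique E (Y \<union> U)"
        by (meson Diff_iff PowD PowI is_clique_union_imp_subset_nbhd)
      then show "(-1) ^ card U * join_norm2 (Y \<union> U) y = 0"
        by (simp add: join_norm2_nonclique)
    qed
  qed
  then show ?thesis
    unfolding brehmer_sum_def using join_norm2_union[OF assms True] by simp
qed

definition weighted_brehmer_sum :: "nat set \<Rightarrow> nat \<Rightarrow> 'a \<Rightarrow> real" where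
  "weighted_brehmer_sum S j y =
     (\<Sum>Y\<in>Pow S. mchoose (clique_number_on E S - card Y) j * brehmer_sum S Y y)"

lemma weighted_brehmer_sum_nonneg:
  "brehmer_positive S \<Longrightarrow> S \<subseteq> {1..n} \<Longrightarrow> 0 \<le> weighted_brehmer_sum S j y"
  unfolding weighted_brehmer_sum_def
  by (intro sum_nonneg mult_nonneg_nonneg mchoose_nonneg brehmer_sum_nonneg) auto

lemma weighted_brehmer_sum_swap:
  assumes "S \<subseteq> {1..n}"
  shows "weighted_brehmer_sum S j y = (\<Sum>V\<in>Pow S. join_norm2 V y *
     (\<Sum>Y\<in>Pow V. (-1) ^ (card V - card Y) * mchoose (clique_number_on E S - card Y) j))"
proof -
  let ?c = "\<lambda>Y. mchoose (clique_number_on E S - card Y) j"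
  have "finite S"
    using assms by (rule finite_subset[OF _ finite_atLeastAtMost])
  have "weighted_brehmer_sum S j y
      = (\<Sum>Y\<in>Pow S. \<Sum>V\<in>{V \<in> Pow S. Y \<subseteq> V}. ?c Y * ((-1) ^ (card V - card Y) * join_norm2 V y))"
    unfolding weighted_brehmer_sum_def
  proof (intro sum.cong refl)
    fix Y assume "Y \<in> Pow S"
    then show "?c Y * brehmer_sum S Y y
        = (\<Sum>V\<in>{V \<in> Pow S. Y \<subseteq> V}. ?c Y * ((-1) ^ (card V - card Y) * join_norm2 V y))"
      using sum_Pow_diff_eq_sum_supersets[OF \<open>finite S\<close>, of Y "\<lambda>V k. ?c Y * ((-1) ^ k * join_norm2 V y)"]
      by (simp add: brehmer_sum_eq[OF assms] sum_distrib_left)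
  qed
  also have "\<dots> = (\<Sum>V\<in>Pow S. \<Sum>Y\<in>{Y \<in> Pow S. Y \<subseteq> V}. ?c Y * ((-1) ^ (card V - card Y) * join_norm2 V y))"
    using \<open>finite S\<close> by (intro sum.swap_restrict) auto
  also have "\<dots> = (\<Sum>V\<in>Pow S. join_norm2 V y * (\<Sum>Y\<in>Pow V. (-1) ^ (card V - card Y) * ?c Y))"
  proof (intro sum.cong refl)
    fix V assume "V \<in> Pow S"
    then have "{Y \<in> Pow S. Y \<subseteq> V} = Pow V" by auto
    then show "(\<Sum>Y\<in>{Y \<in> Pow S. Y \<subseteq> V}. ?c Y * ((-1) ^ (card V - card Y) * join_norm2 V y))
        = join_norm2 V y * (\<Sum>Y\<in>Pow V. (-1) ^ (card V - card Y) * ?c Y)"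
      by (simp add: sum_distrib_left mult_ac)
  qed
  finally show ?thesis .
qed

lemma weighted_brehmer_sum_eq:
  assumes "S \<subseteq> {1..n}"
  shows "weighted_brehmer_sum S j y = (\<Sum>U\<in>{U \<in> Pow S. is_clique E U \<and> card U \<le> j}.
     (-1) ^ card U * mchoose (clique_number_on E S) (j - card U) * join_norm2 U y)"
proof -
  let ?d = "clique_number_on E S"
  have "finite S"
    using assms by (rule finite_subset[OF _ finite_atLeastAtMost])
  have "join_norm2 V y * (\<Sum>Y\<in>Pow V. (-1) ^ (card V - card Y) * mchoose (?d - card Y) j)
      = (if is_clique E V \<and> card V \<le> j then (-1) ^ card V * mchoose ?d (j - card V) * join_norm2 V y else 0)"
    if "V \<in> Pow S" for V
  proof (cases "is_clique E V")
    case True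
    moreover have "finite V"
      using that \<open>finite S\<close> finite_subset by auto
    moreover have "card V \<le> ?d"
      using that True \<open>finite S\<close> card_le_clique_number_on by auto
    ultimately show ?thesis
      by (simp add: sum_Pow_alternating_mchoose)
  qed (simp add: join_norm2_nonclique)
  then have "weighted_brehmer_sum S j y = (\<Sum>V\<in>Pow S. if is_clique E V \<and> card V \<le> j
      then (-1) ^ card V * mchoose ?d (j - card V) * join_norm2 V y else 0)"
    unfolding weighted_brehmer_sum_swap[OF assms] by (intro sum.cong) auto
  also have "\<dots> = (\<Sum>U\<in>{U \<in> Pow S. is_clique E U \<and> card U \<le> j}.
      (-1) ^ card U * mchoose ?d (j - card U) * join_norm2 U y)"
    by (rule sum.inter_filter[symmetric]) (simp add: \<open>finite S\<close>)
  finally show ?thesis .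
qed

lemma weighted_brehmer_sum_0:
  assumes "S \<subseteq> {1..n}"
  shows "weighted_brehmer_sum S 0 y = (norm y)\<^sup>2"
proof -
  have "finite S"
    using assms by (rule finite_subset[OF _ finite_atLeastAtMost])
  then have "U = {}" if "U \<subseteq> S" "card U = 0" for U
    using that by (meson card_0_eq finite_subset)
  then have "{U \<in> Pow S. is_clique E U \<and> card U \<le> 0} = {{}}"
    by (auto simp: is_clique_def)
  then show ?thesis
    by (simp add: weighted_brehmer_sum_eq[OF assms] join_norm2_empty)
qed

lemma sum_weighted_brehmer_sum:
  assumes "S \<subseteq> {1..n}"
  shows "(\<Sum>p\<in>{p \<in> elems S. mlen p \<le> m}. weighted_brehmer_sum S (m - mlen p) (adjoint (mon_op T p) h))
    = mchoose (clique_number_on E S) m * (norm h)\<^sup>2"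
proof -
  let ?d = "clique_number_on E S"
  let ?G = "\<lambda>p U. (-1) ^ card U * mchoose ?d (m - (mlen p + card U)) * join_norm2 U (adjoint (mon_op T p) h)"
  have "finite S"
    using assms by (rule finite_subset[OF _ finite_atLeastAtMost])
  have "(\<Sum>p\<in>{p \<in> elems S. mlen p \<le> m}. weighted_brehmer_sum S (m - mlen p) (adjoint (mon_op T p) h))
      = (\<Sum>p\<in>{p \<in> elems S. mlen p \<le> m}. \<Sum>U\<in>{U \<in> Pow S. is_clique E U \<and> card U \<le> m - mlen p}. ?G p U)"
    by (intro sum.cong refl) (simp add: weighted_brehmer_sum_eq[OF assms] diff_diff_left)
  also have "\<dots> = (\<Sum>k\<le>m. \<Sum>(p, U)\<in>splittings S k. ?G p U)"
    by (rule sum_splittings_regroup[OF \<open>finite S\<close>])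
  also have "\<dots> = (\<Sum>k\<le>m. mchoose ?d (m - k)
      * (\<Sum>(p, U)\<in>splittings S k. (-1) ^ card U * join_norm2 U (adjoint (mon_op T p) h)))"
    unfolding sum_distrib_left by (intro sum.cong refl) (auto simp: splittings_def)
  also have "\<dots> = (\<Sum>k\<le>m. if k = 0 then mchoose ?d m * (norm h)\<^sup>2 else 0)"
    by (intro sum.cong refl) (simp add: alternating_splitting_sum_join_norm2[OF assms])
  also have "\<dots> = mchoose ?d m * (norm h)\<^sup>2"
    by simp
  finally show ?thesis .
qed

lemma sum_level_norm_adjoint_le:
  assumes "brehmer_positive S" "S \<subseteq> {1..n}"
  shows "(\<Sum>p\<in>{p \<in> elems S. mlen p = m}. (norm (adjoint (mon_op T p) h))\<^sup>2)
    \<le> mchoose (clique_number_on E S) m * (norm h)\<^sup>2"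
proof -
  have "finite S"
    using assms(2) by (rule finite_subset[OF _ finite_atLeastAtMost])
  have "(\<Sum>p\<in>{p \<in> elems S. mlen p = m}. (norm (adjoint (mon_op T p) h))\<^sup>2)
      = (\<Sum>p\<in>{p \<in> elems S. mlen p = m}. weighted_brehmer_sum S (m - mlen p) (adjoint (mon_op T p) h))"
    by (intro sum.cong refl) (simp add: weighted_brehmer_sum_0[OF assms(2)])
  also have "\<dots> \<le> (\<Sum>p\<in>{p \<in> elems S. mlen p \<le> m}. weighted_brehmer_sum S (m - mlen p) (adjoint (mon_op T p) h))"
    using \<open>finite S\<close> assms
    by (intro sum_mono2 finite_elems_mlen_le weighted_brehmer_sum_nonneg) auto
  also have "\<dots> = mchoose (clique_number_on E S) m * (norm h)\<^sup>2"
    by (rule sum_weighted_brehmer_sum[OF assms(2)])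
  finally show ?thesis .
qed

definition weighted_adjoint_sum :: "real \<Rightarrow> nat list set set \<Rightarrow> 'a \<Rightarrow> real" where
  "weighted_adjoint_sum s F h = (\<Sum>p\<in>F. s ^ mlen p * (norm (adjoint (mon_op T p) h))\<^sup>2)"

definition weighted_adjoint_bounded :: "real \<Rightarrow> nat set \<Rightarrow> real \<Rightarrow> bool" where
  "weighted_adjoint_bounded s S K \<longleftrightarrow>
     (\<forall>F h. finite F \<and> F \<subseteq> elems S \<longrightarrow> weighted_adjoint_sum s F h \<le> K * (norm h)\<^sup>2)"

lemma weighted_adjoint_bounded_component:
  fixes s :: real
  assumes "brehmer_positive S" "S \<subseteq> {1..n}" "0 \<le> s" "s < 1"
  shows "weighted_adjoint_bounded s S (1 / (1 - s) ^ clique_number_on E S)"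
  unfolding weighted_adjoint_bounded_def weighted_adjoint_sum_def
proof (intro allI impI, elim conjE)
  fix F h assume "finite F" "F \<subseteq> elems S"
  let ?d = "clique_number_on E S"
  define N where "N = Max (insert 0 (mlen ` F))"
  have "finite S"
    using assms(2) by (rule finite_subset[OF _ finite_atLeastAtMost])
  have "F \<subseteq> {p \<in> elems S. mlen p \<le> N}"
    using \<open>finite F\<close> \<open>F \<subseteq> elems S\<close> by (auto simp: N_def)
  then have "(\<Sum>p\<in>F. s ^ mlen p * (norm (adjoint (mon_op T p) h))\<^sup>2)
      \<le> (\<Sum>p\<in>{p \<in> elems S. mlen p \<le> N}. s ^ mlen p * (norm (adjoint (mon_op T p) h))\<^sup>2)"
    using \<open>finite S\<close> assms(3) by (intro sum_mono2 finite_elems_mlen_le) auto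
  also have "\<dots> = (\<Sum>m\<le>N. s ^ m * (\<Sum>p\<in>{p \<in> elems S. mlen p = m}. (norm (adjoint (mon_op T p) h))\<^sup>2))"
    unfolding sum_distrib_left
    by (subst sum.group[symmetric, of _ "{..N}" mlen])
      (auto simp: \<open>finite S\<close> finite_elems_mlen_le intro!: sum.cong)
  also have "\<dots> \<le> (\<Sum>m\<le>N. s ^ m * (mchoose ?d m * (norm h)\<^sup>2))"
    using sum_level_norm_adjoint_le[OF assms(1,2)] assms(3)
    by (intro sum_mono mult_left_mono) auto
  also have "\<dots> = (\<Sum>m\<le>N. mchoose ?d m * s ^ m) * (norm h)\<^sup>2"
    unfolding sum_distrib_right by (simp add: mult_ac)
  also have "\<dots> \<le> 1 / (1 - s) ^ ?d * (norm h)\<^sup>2"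
    using mchoose_partial_sum_le[OF assms(3,4)] by (intro mult_right_mono) auto
  finally show "(\<Sum>p\<in>F. s ^ mlen p * (norm (adjoint (mon_op T p) h))\<^sup>2) \<le> 1 / (1 - s) ^ ?d * (norm h)\<^sup>2" .
qed

section \<open>Assembling the components\<close>

lemma adjoint_mon_op_restrict_elem:
  assumes "A \<union> B \<subseteq> {1..n}" "A \<inter> B = {}" "\<forall>a\<in>A. \<forall>b\<in>B. E a b" "q \<in> elems (A \<union> B)"
  shows "adjoint (mon_op T q) = adjoint (mon_op T (restrict_elem B q)) \<circ> adjoint (mon_op T (restrict_elem A q))"
    and "mlen q = mlen (restrict_elem A q) + mlen (restrict_elem B q)"
proof -
  obtain w where w: "q = melem w" "set w \<subseteq> A \<union> B"
    using assms(4) by (auto simp: elems_def)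
  then have restrict: "restrict_elem A q = melem (filter (\<lambda>x. x \<in> A) w)"
    "restrict_elem B q = melem (filter (\<lambda>x. x \<in> B) w)"
    by (simp_all add: restrict_elem_melem)
  from w have q: "q = melem (filter (\<lambda>x. x \<in> A) w @ filter (\<lambda>x. x \<in> B) w)"
    using assms(2,3) weq_split_commuting by (simp add: melem_eq_iff)
  have "set (filter (\<lambda>x. x \<in> A) w) \<subseteq> {1..n}" "set (filter (\<lambda>x. x \<in> B) w) \<subseteq> {1..n}"
    using assms(1) by auto
  then show "adjoint (mon_op T q) = adjoint (mon_op T (restrict_elem B q)) \<circ> adjoint (mon_op T (restrict_elem A q))"
    unfolding restrict using q adjoint_mon_op_append by simp
  show "mlen q = mlen (restrict_elem A q) + mlen (restrict_elem B q)"
    unfolding restrict using q by simp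
qed

lemma weighted_adjoint_bounded_union:
  assumes "A \<union> B \<subseteq> {1..n}" "A \<inter> B = {}" "\<forall>a\<in>A. \<forall>b\<in>B. E a b" "0 \<le> s" "0 \<le> KB"
    and "weighted_adjoint_bounded s A KA" "weighted_adjoint_bounded s B KB"
  shows "weighted_adjoint_bounded s (A \<union> B) (KA * KB)"
  unfolding weighted_adjoint_bounded_def
proof (intro allI impI, elim conjE)
  fix F h assume F: "finite F" "F \<subseteq> elems (A \<union> B)"
  let ?\<pi> = "\<lambda>q. (restrict_elem A q, restrict_elem B q)"
  let ?g = "\<lambda>a b. s ^ mlen a * (s ^ mlen b * (norm (adjoint (mon_op T b) (adjoint (mon_op T a) h)))\<^sup>2)"
  let ?FA = "restrict_elem A ` F" and ?FB = "restrict_elem B ` F"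
  have FA: "finite ?FA" "?FA \<subseteq> elems A" and FB: "finite ?FB" "?FB \<subseteq> elems B"
    using F restrict_elem_in_elems by auto
  have "weighted_adjoint_sum s F h = (\<Sum>q\<in>F. case_prod ?g (?\<pi> q))"
    unfolding weighted_adjoint_sum_def
    using F adjoint_mon_op_restrict_elem[OF assms(1-3)]
    by (intro sum.cong refl) (auto simp: power_add mult_ac subset_iff)
  also have "\<dots> = (\<Sum>(a, b)\<in>?\<pi> ` F. ?g a b)"
    using inj_on_restrict_elem[OF assms(2,3)] F(2) by (simp add: sum.reindex inj_on_subset)
  also have "\<dots> \<le> (\<Sum>(a, b)\<in>?FA \<times> ?FB. ?g a b)"
    using FA FB assms(4) by (intro sum_mono2) auto
  also have "\<dots> = (\<Sum>a\<in>?FA. s ^ mlen a * weighted_adjoint_sum s ?FB (adjoint (mon_op T a) h))"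
    by (simp add: sum.cartesian_product[symmetric] weighted_adjoint_sum_def sum_distrib_left)
  also have "\<dots> \<le> (\<Sum>a\<in>?FA. s ^ mlen a * (KB * (norm (adjoint (mon_op T a) h))\<^sup>2))"
    using assms(4,7) FB by (intro sum_mono mult_left_mono) (auto simp: weighted_adjoint_bounded_def)
  also have "\<dots> = KB * weighted_adjoint_sum s ?FA h"
    by (simp add: weighted_adjoint_sum_def sum_distrib_left mult_ac)
  also have "\<dots> \<le> KB * (KA * (norm h)\<^sup>2)"
    using assms(5,6) FA by (intro mult_left_mono) (auto simp: weighted_adjoint_bounded_def)
  finally show "weighted_adjoint_sum s F h \<le> KA * KB * (norm h)\<^sup>2"
    by (simp add: mult_ac)
qed

lemma weighted_adjoint_bounded_mono:
  assumes "weighted_adjoint_bounded s S K" "K \<le> K'"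
  shows "weighted_adjoint_bounded s S K'"
  unfolding weighted_adjoint_bounded_def
proof (intro allI impI)
  fix F h assume "finite F \<and> F \<subseteq> elems S"
  with assms(1) have "weighted_adjoint_sum s F h \<le> K * (norm h)\<^sup>2"
    by (simp add: weighted_adjoint_bounded_def)
  also have "\<dots> \<le> K' * (norm h)\<^sup>2"
    using assms(2) by (rule mult_right_mono) simp
  finally show "weighted_adjoint_sum s F h \<le> K' * (norm h)\<^sup>2" .
qed

lemma weighted_adjoint_bounded_empty:
  assumes "0 \<le> s"
  shows "weighted_adjoint_bounded s {} 1"
  unfolding weighted_adjoint_bounded_def
proof (intro allI impI)
  fix F h assume "finite F \<and> F \<subseteq> elems {}"
  then have "F \<subseteq> {melem []}"
    by (auto simp: elems_def)
  then have "weighted_adjoint_sum s F h \<le> weighted_adjoint_sum s {melem []} h"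
    unfolding weighted_adjoint_sum_def using assms by (intro sum_mono2) auto
  also have "\<dots> = (norm h)\<^sup>2"
    using mon_op_melem[of "[]"] by (simp add: weighted_adjoint_sum_def adjoint_id)
  finally show "weighted_adjoint_sum s F h \<le> 1 * (norm h)\<^sup>2"
    by simp
qed

lemma weighted_adjoint_bounded_compl_components:
  fixes s :: real
  assumes "weak_brehmer n E T" "0 \<le> s" "s < 1" "C \<subseteq> compl_components n E"
  shows "weighted_adjoint_bounded s (\<Union>C) (\<Prod>V\<in>C. 1 / (1 - s) ^ clique_number_on E V)"
proof -
  have "finite C"
    using assms(4) by (rule finite_subset) (simp add: compl_components_def)
  then show ?thesis
    using assms(4)
  proof (induction C rule: finite_induct)
    case empty
    then show ?case
      using weighted_adjoint_bounded_empty[OF assms(2)] by simp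
  next
    case (insert V C)
    then have V: "V \<in> compl_components n E" "C \<subseteq> compl_components n E"
      by auto
    have "V \<union> \<Union>C \<subseteq> {1..n}"
      using V compl_components_subset by blast
    moreover have "V \<inter> \<Union>C = {}"
      using compl_components_disjoint[OF V(1)] V(2) insert.hyps(2) by blast
    moreover have "\<forall>a\<in>V. \<forall>b\<in>\<Union>C. E a b"
      using compl_components_adjacent[OF V(1)] V(2) insert.hyps(2) by blast
    moreover have "weighted_adjoint_bounded s V (1 / (1 - s) ^ clique_number_on E V)"
      using compl_components_subset[OF V(1)] assms(2,3)
      by (intro weighted_adjoint_bounded_component weak_brehmer_imp_brehmer_positive[OF assms(1) V(1)])
    moreover have "0 \<le> (\<Prod>V\<in>C. 1 / (1 - s) ^ clique_number_on E V)"
      using assms(3) by (intro prod_nonneg) simp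
    ultimately have "weighted_adjoint_bounded s (V \<union> \<Union>C)
        (1 / (1 - s) ^ clique_number_on E V * (\<Prod>V\<in>C. 1 / (1 - s) ^ clique_number_on E V))"
      using insert.IH[OF V(2)] assms(2) by (intro weighted_adjoint_bounded_union)
    with insert.hyps show ?case
      by simp
  qed
qed

lemma weighted_adjoint_bounded_vertices:
  fixes s :: real
  assumes "weak_brehmer n E T" "0 \<le> s" "s < 1"
  shows "weighted_adjoint_bounded s {1..n} (1 / (1 - s) ^ clique_number n E)"
proof -
  have bounded: "weighted_adjoint_bounded s {1..n} (\<Prod>V\<in>compl_components n E. 1 / (1 - s) ^ clique_number_on E V)"
    using weighted_adjoint_bounded_compl_components[OF assms order_refl]
    by (simp add: Union_compl_components)
  have "(\<Prod>V\<in>compl_components n E. 1 / (1 - s) ^ clique_number_on E V)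
      = (1 / (1 - s)) ^ (\<Sum>V\<in>compl_components n E. clique_number_on E V)"
    by (simp add: power_sum power_one_over)
  also have "\<dots> \<le> (1 / (1 - s)) ^ clique_number n E"
    using assms(2,3) sum_clique_number_on_compl_components by (intro power_increasing) auto
  finally have "(\<Prod>V\<in>compl_components n E. 1 / (1 - s) ^ clique_number_on E V) \<le> 1 / (1 - s) ^ clique_number n E"
    by (simp add: power_one_over)
  with bounded show ?thesis
    by (rule weighted_adjoint_bounded_mono)
qed

lemma raam_eq_elems: "raam n E = elems {1..n}"
  by (simp add: raam_def elems_def melem_def[abs_def])

lemma sum_norm_cauchy_transform_le:
  assumes "weak_brehmer n E T" "0 \<le> r" "r < 1" "finite F" "F \<subseteq> raam n E"
  shows "(\<Sum>p\<in>F. (norm (cauchy_transform r T h p))\<^sup>2) \<le> (norm h)\<^sup>2 / (1 - r\<^sup>2) ^ clique_number n E"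
proof -
  have "(norm (cauchy_transform r T h p))\<^sup>2 = (r\<^sup>2) ^ mlen p * (norm (adjoint (mon_op T p) h))\<^sup>2" for p
  proof -
    have "(r ^ mlen p)\<^sup>2 = (r\<^sup>2) ^ mlen p"
      by (simp add: mult.commute flip: power_mult)
    then show ?thesis
      by (simp add: cauchy_transform_def power_mult_distrib)
  qed
  then have "(\<Sum>p\<in>F. (norm (cauchy_transform r T h p))\<^sup>2) = weighted_adjoint_sum (r\<^sup>2) F h"
    by (simp add: weighted_adjoint_sum_def)
  moreover have "weighted_adjoint_bounded (r\<^sup>2) {1..n} (1 / (1 - r\<^sup>2) ^ clique_number n E)"
    using assms(1-3) by (intro weighted_adjoint_bounded_vertices) (simp_all add: abs_square_less_1)
  ultimately show ?thesis
    using assms(4,5) unfolding weighted_adjoint_bounded_def raam_eq_elems by simp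
qed

lemma linear_cauchy_transform:
  assumes "p \<in> raam n E"
  shows "linear (\<lambda>h. cauchy_transform r T h p)"
proof -
  have l: "linear (adjoint (mon_op T p))"
    using assms by (intro linear_adjoint bounded_linear_mon_op) (auto simp: raam_eq_elems)
  show ?thesis
    unfolding cauchy_transform_def
    by (rule linearI) (simp_all add: linear_add[OF l] linear_scale[OF l] scaleR_add_right)
qed

end

theorem theorem4p4:
  fixes n :: nat and E :: "nat \<Rightarrow> nat \<Rightarrow> bool"
    and T :: "nat \<Rightarrow> 'a::{real_inner, complete_space} \<Rightarrow> 'a"
  assumes sym: "\<forall>i j. E i j \<longrightarrow> E j i"
    and irrefl: "\<forall>i. \<not> E i i"
    and fam: "gamma_family n E T"
    and brehmer: "weak_brehmer n E T"
  shows "\<forall>r::real. 0 \<le> r \<and> r < 1 \<longrightarrow>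
           (\<forall>h. (\<lambda>p. (norm (cauchy_transform r T h p))\<^sup>2) summable_on raam n E) \<and>
           (\<forall>p\<in>raam n E. linear (\<lambda>h. cauchy_transform r T h p)) \<and>
           (\<forall>h. (\<Sum>\<^sub>\<infinity>p\<in>raam n E. (norm (cauchy_transform r T h p))\<^sup>2)
                  \<le> (norm h)\<^sup>2 / (1 - r\<^sup>2) ^ clique_number n E)"
proof (intro allI impI conjI ballI)
  fix r :: real and h :: 'a assume r: "0 \<le> r \<and> r < 1"
  interpret gamma_representation E n T
    using sym irrefl fam by unfold_locales auto
  have bound: "(\<Sum>p\<in>F. (norm (cauchy_transform r T h p))\<^sup>2) \<le> (norm h)\<^sup>2 / (1 - r\<^sup>2) ^ clique_number n E"
    if "finite F" "F \<subseteq> raam n E" for F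
    using sum_norm_cauchy_transform_le[OF brehmer] r that by blast
  show summable: "(\<lambda>p. (norm (cauchy_transform r T h p))\<^sup>2) summable_on raam n E"
    using bound
    by (intro nonneg_bdd_above_summable_on bdd_aboveI[of _ "(norm h)\<^sup>2 / (1 - r\<^sup>2) ^ clique_number n E"])
      auto
  show "(\<Sum>\<^sub>\<infinity>p\<in>raam n E. (norm (cauchy_transform r T h p))\<^sup>2) \<le> (norm h)\<^sup>2 / (1 - r\<^sup>2) ^ clique_number n E"
    using summable bound by (rule infsum_le_finite_sums)
  show "linear (\<lambda>h. cauchy_transform r T h p)" if "p \<in> raam n E" for p
    using that by (rule linear_cauchy_transform)
qed

end
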